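(* Let $A=[a_1,\dots,a_N]\in\mathbb{C}^{n\times N}$ be a random matrix with i.i.d. entries distributed as $N(0,1)+iN(0,1)$, let $x_0\in\mathbb{C}^n$ with $\|x_0\|=1$, and $b(j)=|a_j^*x_0|$. Let $I\subset\{1,\dots,N\}$ be such that $b(i)\le b(j)$ for all $i\in I$, $j\notin I$, with $|I|<N$, and let $\|b_I\|^2=\sum_{i\in I}b(i)^2$. Define $\tau_*=-2\ln(1-|I|/N)$, $\hat I=\{i:b(i)^2\le\tau_*\}$ and $\|\hat b\|^2=\sum_{i\in\hat I}b(i)^2$. Then for each $\epsilon>0$ and $\delta>0$, \[ \frac{\|b_I\|^2}{|I|}\le\frac{\|\hat b\|^2}{|\hat I|}+\epsilon(\tau_*+\delta) \] with probability at least \[ 1-2\exp\left(-\frac12\delta^2e^{-\delta}\left|1-|I|/N\right|^2N\right)-2\exp\left(-2\epsilon^2\left|1-|I|/N\right|^2\frac{|I|^2}{N}\right). \]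
   Context: $A^*$ denotes conjugate transpose; $\|\cdot\|$ is the Euclidean norm. *)

theory Defs
  imports "HOL-Probability.Probability"
begin

text \<open>A random n x N complex matrix (as a random variable A :: omega => nat => nat => complex,
  entry (k,j) for k < n, j < N; column j is a_j) whose entries are i.i.d.\<close>
definition iid_complex_gaussian_matrix ::
  "'w measure \<Rightarrow> ('w \<Rightarrow> nat \<Rightarrow> nat \<Rightarrow> complex) \<Rightarrow> nat \<Rightarrow> nat \<Rightarrow> bool" where
  "iid_complex_gaussian_matrix M A n N \<longleftrightarrow>
     prob_space.indep_vars M (\<lambda>_. borel)
       (\<lambda>(k, j, re) \<omega>. if re then Re (A \<omega> k j) else Im (A \<omega> k j))
       ({..<n} \<times> {..<N} \<times> (UNIV :: bool set))
   \<and> (\<forall>k<n. \<forall>j<N.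
        distributed M lborel (\<lambda>\<omega>. Re (A \<omega> k j)) (\<lambda>x. ennreal (std_normal_density x))
      \<and> distributed M lborel (\<lambda>\<omega>. Im (A \<omega> k j)) (\<lambda>x. ennreal (std_normal_density x)))"

definition cvec_norm :: "nat \<Rightarrow> (nat \<Rightarrow> complex) \<Rightarrow> real" where
  "cvec_norm n x = sqrt (\<Sum>k<n. (cmod (x k))\<^sup>2)"

definition bval :: "nat \<Rightarrow> (nat \<Rightarrow> nat \<Rightarrow> complex) \<Rightarrow> (nat \<Rightarrow> complex) \<Rightarrow> nat \<Rightarrow> real" where
  "bval n A x0 j = cmod (\<Sum>k<n. cnj (A k j) * x0 k)"

definition tau_star :: "nat \<Rightarrow> nat \<Rightarrow> real" where
  "tau_star m N = - 2 * ln (1 - real m / real N)"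

definition Ihat :: "(nat \<Rightarrow> real) \<Rightarrow> nat \<Rightarrow> real \<Rightarrow> nat set" where
  "Ihat b N \<tau> = {i \<in> {..<N}. (b i)\<^sup>2 \<le> \<tau>}"

end

theory Submission
  imports Defs "HOL-Real_Asymp.Real_Asymp"
begin

text \<open>The pair \<open>(Re, Im)\<close> of \<open>a\<^sub>j\<^sup>* x\<^sub>0\<close> is built up one entry at a time: each term
  \<open>cnj a\<^sub>k\<^sub>j x\<^sub>0\<^sub>k\<close> is a scaled reflection of the standard Gaussian pair \<open>(Re a\<^sub>k\<^sub>j, Im a\<^sub>k\<^sub>j)\<close>,
  and sums of independent isotropic Gaussian pairs are isotropic Gaussian. As \<open>\<parallel>x\<^sub>0\<parallel> = 1\<close>, the
  \<open>b(j)\<^sup>2\<close> are therefore independent with \<open>P(b(j)\<^sup>2 \<le> t) = 1 - e\<^sup>-\<^sup>t\<^sup>/\<^sup>2\<close>, so that \<open>\<tau>\<^sub>*\<close> is the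
  \<open>|I|/N\<close>-quantile. By Hoeffding's inequality, with the stated probability at least
  \<open>(1 - \<epsilon>) |I|\<close> of the \<open>b(j)\<^sup>2\<close> are \<open>\<le> \<tau>\<^sub>*\<close> and at least \<open>|I|\<close> of them are \<open>\<le> \<tau>\<^sub>* + \<delta>\<close>. On that
  event \<open>I\<close> and \<open>\<hat>I\<close>, both sets of indices with smallest \<open>b\<close>-values, are nested, and the mean
  over \<open>I\<close> exceeds the mean over \<open>\<hat>I\<close> by at most \<open>\<epsilon> (\<tau>\<^sub>* + \<delta>)\<close>.\<close>

lemma nn_integral_lborel_affine_subst:
  fixes g h :: "real \<Rightarrow> ennreal"
  assumes c: "c \<noteq> 0" and gh: "\<And>x. ennreal \<bar>c\<bar> * g (t + c * x) = h x"
    and [measurable]: "g \<in> borel_measurable borel"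
  shows "(\<integral>\<^sup>+y. g y \<partial>lborel) = (\<integral>\<^sup>+x. h x \<partial>lborel)"
proof -
  have "(\<integral>\<^sup>+y. g y \<partial>lborel) = ennreal \<bar>c\<bar> * (\<integral>\<^sup>+x. g (t + c * x) \<partial>lborel)"
    by (rule nn_integral_real_affine[OF _ c]) measurable
  also have "\<dots> = (\<integral>\<^sup>+x. ennreal \<bar>c\<bar> * g (t + c * x) \<partial>lborel)"
    by (rule nn_integral_cmult[symmetric]) measurable
  finally show ?thesis by (simp add: gh)
qed

lemma nn_integral_normal_convolution:
  fixes g :: "real \<Rightarrow> ennreal" and s r :: real
  assumes [measurable]: "g \<in> borel_measurable borel" and s: "s > 0" and r: "r > 0"
  shows "(\<integral>\<^sup>+b. \<integral>\<^sup>+d. g (b + d) * ennreal (normal_density 0 s b) * ennreal (normal_density 0 r d) \<partial>lborel \<partial>lborel)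
       = (\<integral>\<^sup>+y. g y * ennreal (normal_density 0 (sqrt (r\<^sup>2 + s\<^sup>2)) y) \<partial>lborel)"
proof -
  have "(\<integral>\<^sup>+b. \<integral>\<^sup>+d. g (b + d) * ennreal (normal_density 0 s b) * ennreal (normal_density 0 r d) \<partial>lborel \<partial>lborel)
     = (\<integral>\<^sup>+b. \<integral>\<^sup>+y. g y * ennreal (normal_density 0 s b) * ennreal (normal_density 0 r (y - b)) \<partial>lborel \<partial>lborel)"
  proof (rule nn_integral_cong)
    fix b :: real
    show "(\<integral>\<^sup>+d. g (b + d) * ennreal (normal_density 0 s b) * ennreal (normal_density 0 r d) \<partial>lborel)
      = (\<integral>\<^sup>+y. g y * ennreal (normal_density 0 s b) * ennreal (normal_density 0 r (y - b)) \<partial>lborel)"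
      by (subst nn_integral_real_affine[where c=1 and t=b]) auto
  qed
  also have "\<dots> = (\<integral>\<^sup>+y. \<integral>\<^sup>+b. g y * ennreal (normal_density 0 s b) * ennreal (normal_density 0 r (y - b)) \<partial>lborel \<partial>lborel)"
    by (rule lborel_pair.Fubini') measurable
  also have "\<dots> = (\<integral>\<^sup>+y. g y * (\<integral>\<^sup>+b. ennreal (normal_density 0 r (y - b) * normal_density 0 s b) \<partial>lborel) \<partial>lborel)"
    by (intro nn_integral_cong, subst nn_integral_cmult[symmetric])
       (auto simp: ennreal_mult' mult_ac intro!: nn_integral_cong)
  also have "\<dots> = (\<integral>\<^sup>+y. g y * ennreal (normal_density 0 (sqrt (r\<^sup>2 + s\<^sup>2)) y) \<partial>lborel)"
    using fun_cong[OF conv_normal_density_zero_mean[OF r s]] by simp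
  finally show ?thesis .
qed

lemma nn_integral_normal_pair_convolution:
  fixes f :: "real \<times> real \<Rightarrow> ennreal"
  assumes f[measurable]: "f \<in> borel_measurable borel" and s: "s > 0" and r: "r > 0"
  defines "E \<equiv> \<lambda>s x. ennreal (normal_density 0 s x)"
  shows "(\<integral>\<^sup>+a. \<integral>\<^sup>+b. (\<integral>\<^sup>+c. \<integral>\<^sup>+d. f ((a, b) + (c, d)) * E r c * E r d \<partial>lborel \<partial>lborel) * E s a * E s b \<partial>lborel \<partial>lborel)
       = (\<integral>\<^sup>+x. \<integral>\<^sup>+y. f (x, y) * E (sqrt (s\<^sup>2 + r\<^sup>2)) x * E (sqrt (s\<^sup>2 + r\<^sup>2)) y \<partial>lborel \<partial>lborel)"
proof -
  have [measurable]: "E s \<in> borel_measurable borel" for s unfolding E_def by measurable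
  have "(\<integral>\<^sup>+a. \<integral>\<^sup>+b. (\<integral>\<^sup>+c. \<integral>\<^sup>+d. f ((a, b) + (c, d)) * E r c * E r d \<partial>lborel \<partial>lborel) * E s a * E s b \<partial>lborel \<partial>lborel)
      = (\<integral>\<^sup>+a. \<integral>\<^sup>+b. \<integral>\<^sup>+c. \<integral>\<^sup>+d. f (a + c, b + d) * E s a * E s b * E r c * E r d \<partial>lborel \<partial>lborel \<partial>lborel \<partial>lborel)"
    by (intro nn_integral_cong, subst nn_integral_multc[symmetric], measurable,
        subst nn_integral_multc[symmetric], measurable,
        intro nn_integral_cong, subst nn_integral_multc[symmetric], measurable,
        subst nn_integral_multc[symmetric], measurable,
        intro nn_integral_cong) (simp add: mult_ac)
  also have "\<dots> = (\<integral>\<^sup>+a. \<integral>\<^sup>+c. \<integral>\<^sup>+b. \<integral>\<^sup>+d. f (a + c, b + d) * E s a * E s b * E r c * E r d \<partial>lborel \<partial>lborel \<partial>lborel \<partial>lborel)"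
    by (intro nn_integral_cong lborel_pair.Fubini') measurable
  also have "\<dots> = (\<integral>\<^sup>+a. \<integral>\<^sup>+c. E s a * E r c * (\<integral>\<^sup>+b. \<integral>\<^sup>+d. f (a + c, b + d) * E s b * E r d \<partial>lborel \<partial>lborel) \<partial>lborel \<partial>lborel)"
    by (intro nn_integral_cong, subst nn_integral_cmult[symmetric], measurable,
        intro nn_integral_cong, subst nn_integral_cmult[symmetric], measurable,
        intro nn_integral_cong) (simp add: mult_ac)
  also have "\<dots> = (\<integral>\<^sup>+a. \<integral>\<^sup>+c. (\<lambda>x. \<integral>\<^sup>+y. f (x, y) * E (sqrt (r\<^sup>2 + s\<^sup>2)) y \<partial>lborel) (a + c) * E s a * E r c \<partial>lborel \<partial>lborel)"
  proof (intro nn_integral_cong)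
    fix a c :: real
    show "E s a * E r c * (\<integral>\<^sup>+b. \<integral>\<^sup>+d. f (a + c, b + d) * E s b * E r d \<partial>lborel \<partial>lborel)
       = (\<lambda>x. \<integral>\<^sup>+y. f (x, y) * E (sqrt (r\<^sup>2 + s\<^sup>2)) y \<partial>lborel) (a + c) * E s a * E r c"
      using nn_integral_normal_convolution[OF _ s r, of "\<lambda>y. f (a + c, y)"] by (simp add: E_def mult_ac)
  qed
  also have "\<dots> = (\<integral>\<^sup>+x. (\<integral>\<^sup>+y. f (x, y) * E (sqrt (r\<^sup>2 + s\<^sup>2)) y \<partial>lborel) * E (sqrt (r\<^sup>2 + s\<^sup>2)) x \<partial>lborel)"
    unfolding E_def by (rule nn_integral_normal_convolution[OF _ s r]) measurable
  also have "\<dots> = (\<integral>\<^sup>+x. \<integral>\<^sup>+y. f (x, y) * E (sqrt (s\<^sup>2 + r\<^sup>2)) x * E (sqrt (s\<^sup>2 + r\<^sup>2)) y \<partial>lborel \<partial>lborel)"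
    by (intro nn_integral_cong, subst nn_integral_multc[symmetric], measurable,
        intro nn_integral_cong) (simp add: mult_ac add.commute)
  finally show ?thesis .
qed

lemma normal_density_scale:
  assumes "\<alpha> \<noteq> 0"
  shows "\<bar>\<alpha>\<bar> * normal_density 0 \<bar>\<alpha>\<bar> (\<alpha> * x) = normal_density 0 1 x"
  using assms by (simp add: normal_density_def power_mult_distrib real_sqrt_mult field_simps)

lemma nn_integral_normal_scale:
  fixes g :: "real \<Rightarrow> ennreal"
  assumes [measurable]: "g \<in> borel_measurable borel" and \<alpha>: "\<alpha> \<noteq> 0"
  shows "(\<integral>\<^sup>+x. g (\<alpha> * x) * ennreal (normal_density 0 1 x) \<partial>lborel)
       = (\<integral>\<^sup>+u. g u * ennreal (normal_density 0 \<bar>\<alpha>\<bar> u) \<partial>lborel)"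
proof -
  have "ennreal \<bar>\<alpha>\<bar> * (g (0 + \<alpha> * x) * ennreal (normal_density 0 \<bar>\<alpha>\<bar> (0 + \<alpha> * x)))
      = g (\<alpha> * x) * ennreal (normal_density 0 1 x)" for x
  proof -
    have "ennreal \<bar>\<alpha>\<bar> * ennreal (normal_density 0 \<bar>\<alpha>\<bar> (\<alpha> * x)) = ennreal (normal_density 0 1 x)"
      using normal_density_scale[OF \<alpha>, of x] by (simp add: ennreal_mult'[symmetric])
    then show ?thesis by (metis add_0 mult.left_commute)
  qed
  then show ?thesis
    by (rule nn_integral_lborel_affine_subst[OF \<alpha>, symmetric]) measurable
qed

lemma normal_density_mult_normal_density:
  assumes "r > 0"
  shows "normal_density 0 r a * normal_density 0 r b = exp (- ((a\<^sup>2 + b\<^sup>2) / (2 * r\<^sup>2))) / (2 * pi * r\<^sup>2)"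
proof -
  have "normal_density 0 r a * normal_density 0 r b
      = (exp (- a\<^sup>2 / (2 * r\<^sup>2)) * exp (- b\<^sup>2 / (2 * r\<^sup>2))) / (sqrt (2 * pi * r\<^sup>2) * sqrt (2 * pi * r\<^sup>2))"
    by (simp add: normal_density_def)
  also have "\<dots> = exp (- ((a\<^sup>2 + b\<^sup>2) / (2 * r\<^sup>2))) / (2 * pi * r\<^sup>2)"
    by (simp add: real_sqrt_mult_self mult_exp_exp add_divide_distrib)
  finally show ?thesis .
qed

text \<open>The density identity behind the substitutions \<open>u = \<alpha> x + \<beta> y\<close> (for fixed \<open>x\<close>) and then
  \<open>x = (\<alpha> u + \<beta> v) / r\<^sup>2\<close> (for fixed \<open>u\<close>).\<close>

lemma std_normal_density_shear:
  assumes r: "r > 0" and ab: "\<alpha>\<^sup>2 + \<beta>\<^sup>2 = r\<^sup>2" and b: "\<beta> \<noteq> 0"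
  shows "normal_density 0 1 x * normal_density 0 1 ((u - \<alpha> * x) / \<beta>)
       = r\<^sup>2 * (normal_density 0 r u * normal_density 0 r ((r\<^sup>2 * x - \<alpha> * u) / \<beta>))"
proof -
  have quadratic_form: "(x\<^sup>2 + ((u - \<alpha> * x) / \<beta>)\<^sup>2) / 2 = (u\<^sup>2 + ((r\<^sup>2 * x - \<alpha> * u) / \<beta>)\<^sup>2) / (2 * r\<^sup>2)"
  proof -
    have "r\<^sup>2 \<noteq> 0" using r by simp
    have "(x\<^sup>2 + ((u - \<alpha> * x) / \<beta>)\<^sup>2) / 2 = (u\<^sup>2 + (\<alpha>\<^sup>2 + \<beta>\<^sup>2) * x\<^sup>2 - 2 * \<alpha> * u * x) / (2 * \<beta>\<^sup>2)"
      using b by (simp add: field_simps power2_eq_square)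
    moreover have "u\<^sup>2 + (((\<alpha>\<^sup>2 + \<beta>\<^sup>2) * x - \<alpha> * u) / \<beta>)\<^sup>2 = (\<alpha>\<^sup>2 + \<beta>\<^sup>2) * (u\<^sup>2 + (\<alpha>\<^sup>2 + \<beta>\<^sup>2) * x\<^sup>2 - 2 * \<alpha> * u * x) / \<beta>\<^sup>2"
      using b by (simp add: field_simps power2_eq_square)
    ultimately show ?thesis using \<open>r\<^sup>2 \<noteq> 0\<close> b by (simp add: ab) (simp add: field_simps)
  qed
  have "normal_density 0 1 x * normal_density 0 1 ((u - \<alpha> * x) / \<beta>) = exp (- ((x\<^sup>2 + ((u - \<alpha> * x) / \<beta>)\<^sup>2) / 2)) / (2 * pi)"
    using normal_density_mult_normal_density[of 1] by simp
  also have "\<dots> = r\<^sup>2 * (normal_density 0 r u * normal_density 0 r ((r\<^sup>2 * x - \<alpha> * u) / \<beta>))"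
    using r by (simp add: quadratic_form normal_density_mult_normal_density)
  finally show ?thesis .
qed

lemma nn_integral_normal_scaled_reflection_shear:
  fixes f :: "real \<times> real \<Rightarrow> ennreal"
  assumes f[measurable]: "f \<in> borel_measurable borel"
    and r: "r > 0" and ab: "\<alpha>\<^sup>2 + \<beta>\<^sup>2 = r\<^sup>2" and b: "\<beta> \<noteq> 0"
  shows "(\<integral>\<^sup>+x. \<integral>\<^sup>+y. f (\<alpha> * x + \<beta> * y, \<beta> * x - \<alpha> * y) * ennreal (normal_density 0 1 x * normal_density 0 1 y) \<partial>lborel \<partial>lborel)
       = (\<integral>\<^sup>+u. \<integral>\<^sup>+v. f (u, v) * ennreal (normal_density 0 r u * normal_density 0 r v) \<partial>lborel \<partial>lborel)"
proof -
  let ?n = "normal_density 0 1" and ?m = "normal_density 0 r"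
  let ?H = "\<lambda>x u. f (u, (r\<^sup>2 * x - \<alpha> * u) / \<beta>) * ennreal (?n x * ?n ((u - \<alpha> * x) / \<beta>) / \<bar>\<beta>\<bar>)"
  have inner_x: "(\<integral>\<^sup>+y. f (\<alpha> * x + \<beta> * y, \<beta> * x - \<alpha> * y) * ennreal (?n x * ?n y) \<partial>lborel) = (\<integral>\<^sup>+u. ?H x u \<partial>lborel)"
    for x
  proof -
    have "ennreal \<bar>\<beta>\<bar> * ?H x (\<alpha> * x + \<beta> * y) = f (\<alpha> * x + \<beta> * y, \<beta> * x - \<alpha> * y) * ennreal (?n x * ?n y)" for y
    proof -
      have "(r\<^sup>2 * x - \<alpha> * (\<alpha> * x + \<beta> * y)) / \<beta> = \<beta> * x - \<alpha> * y"
        unfolding ab[symmetric] using b by (simp add: field_simps power2_eq_square)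
      moreover have "(\<alpha> * x + \<beta> * y - \<alpha> * x) / \<beta> = y" using b by simp
      moreover have "ennreal \<bar>\<beta>\<bar> * ennreal (?n x * ?n y / \<bar>\<beta>\<bar>) = ennreal (?n x * ?n y)"
        using b by (simp add: ennreal_mult'[symmetric])
      ultimately show ?thesis by (metis mult.left_commute)
    qed
    then show ?thesis by (rule nn_integral_lborel_affine_subst[OF b, symmetric]) measurable
  qed
  have inner_u: "(\<integral>\<^sup>+v. f (u, v) * ennreal (?m u * ?m v) \<partial>lborel) = (\<integral>\<^sup>+x. ?H x u \<partial>lborel)" for u
  proof -
    have c: "r\<^sup>2 / \<beta> \<noteq> 0" using r b by simp
    have "ennreal \<bar>r\<^sup>2 / \<beta>\<bar> * (f (u, - \<alpha> * u / \<beta> + r\<^sup>2 / \<beta> * x) * ennreal (?m u * ?m (- \<alpha> * u / \<beta> + r\<^sup>2 / \<beta> * x)))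
        = ?H x u" for x
    proof -
      have "- \<alpha> * u / \<beta> + r\<^sup>2 / \<beta> * x = (r\<^sup>2 * x - \<alpha> * u) / \<beta>"
        using b by (simp add: field_simps)
      moreover have "?n x * ?n ((u - \<alpha> * x) / \<beta>) / \<bar>\<beta>\<bar> = \<bar>r\<^sup>2 / \<beta>\<bar> * (?m u * ?m ((r\<^sup>2 * x - \<alpha> * u) / \<beta>))"
        using std_normal_density_shear[OF r ab b, of x u] by (simp add: abs_div)
      moreover have "ennreal (\<bar>r\<^sup>2 / \<beta>\<bar> * (?m u * ?m ((r\<^sup>2 * x - \<alpha> * u) / \<beta>)))
          = ennreal \<bar>r\<^sup>2 / \<beta>\<bar> * ennreal (?m u * ?m ((r\<^sup>2 * x - \<alpha> * u) / \<beta>))"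
        by (rule ennreal_mult) auto
      ultimately show ?thesis by (metis mult.left_commute)
    qed
    then show ?thesis by (rule nn_integral_lborel_affine_subst[OF c]) measurable
  qed
  have "(\<integral>\<^sup>+x. \<integral>\<^sup>+y. f (\<alpha> * x + \<beta> * y, \<beta> * x - \<alpha> * y) * ennreal (?n x * ?n y) \<partial>lborel \<partial>lborel)
      = (\<integral>\<^sup>+x. \<integral>\<^sup>+u. ?H x u \<partial>lborel \<partial>lborel)"
    by (simp add: inner_x)
  also have "\<dots> = (\<integral>\<^sup>+u. \<integral>\<^sup>+x. ?H x u \<partial>lborel \<partial>lborel)"
    by (rule lborel_pair.Fubini') measurable
  also have "\<dots> = (\<integral>\<^sup>+u. \<integral>\<^sup>+v. f (u, v) * ennreal (?m u * ?m v) \<partial>lborel \<partial>lborel)"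
    by (simp add: inner_u)
  finally show ?thesis .
qed

lemma nn_integral_normal_scaled_reflection:
  fixes f :: "real \<times> real \<Rightarrow> ennreal"
  assumes f[measurable]: "f \<in> borel_measurable borel"
    and r: "r > 0" and ab: "\<alpha>\<^sup>2 + \<beta>\<^sup>2 = r\<^sup>2"
  shows "(\<integral>\<^sup>+x. \<integral>\<^sup>+y. f (\<alpha> * x + \<beta> * y, \<beta> * x - \<alpha> * y) * ennreal (normal_density 0 1 x) * ennreal (normal_density 0 1 y) \<partial>lborel \<partial>lborel)
       = (\<integral>\<^sup>+u. \<integral>\<^sup>+v. f (u, v) * ennreal (normal_density 0 r u) * ennreal (normal_density 0 r v) \<partial>lborel \<partial>lborel)"
proof (cases "\<beta> = 0")
  case True
  then have "\<bar>\<alpha>\<bar> = r"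
    using ab r by (metis add.right_neutral power2_eq_iff_nonneg abs_ge_zero power2_abs zero_power2 less_imp_le)
  then have \<alpha>: "\<alpha> \<noteq> 0" "\<bar>\<alpha>\<bar> = r" "\<bar>- \<alpha>\<bar> = r"
    using r by auto
  let ?E = "\<lambda>s x. ennreal (normal_density 0 s x)"
  have "(\<integral>\<^sup>+x. \<integral>\<^sup>+y. f (\<alpha> * x, - \<alpha> * y) * ?E 1 x * ?E 1 y \<partial>lborel \<partial>lborel)
      = (\<integral>\<^sup>+x. (\<lambda>u. \<integral>\<^sup>+v. f (u, v) * ?E r v \<partial>lborel) (\<alpha> * x) * ?E 1 x \<partial>lborel)"
  proof (rule nn_integral_cong)
    fix x :: real
    have "(\<integral>\<^sup>+y. f (\<alpha> * x, - \<alpha> * y) * ?E 1 x * ?E 1 y \<partial>lborel) = (\<integral>\<^sup>+y. f (\<alpha> * x, - \<alpha> * y) * ?E 1 y \<partial>lborel) * ?E 1 x"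
      by (subst nn_integral_multc[symmetric]) (simp_all add: mult_ac)
    also have "(\<integral>\<^sup>+y. f (\<alpha> * x, - \<alpha> * y) * ?E 1 y \<partial>lborel) = (\<integral>\<^sup>+v. f (\<alpha> * x, v) * ?E r v \<partial>lborel)"
      using nn_integral_normal_scale[of "\<lambda>v. f (\<alpha> * x, v)" "- \<alpha>"] \<alpha> by simp
    finally show "(\<integral>\<^sup>+y. f (\<alpha> * x, - \<alpha> * y) * ?E 1 x * ?E 1 y \<partial>lborel)
      = (\<lambda>u. \<integral>\<^sup>+v. f (u, v) * ?E r v \<partial>lborel) (\<alpha> * x) * ?E 1 x" by simp
  qed
  also have "\<dots> = (\<integral>\<^sup>+u. (\<integral>\<^sup>+v. f (u, v) * ?E r v \<partial>lborel) * ?E r u \<partial>lborel)"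
    using nn_integral_normal_scale[of "\<lambda>u. \<integral>\<^sup>+v. f (u, v) * ?E r v \<partial>lborel" \<alpha>] \<alpha> by simp
  also have "\<dots> = (\<integral>\<^sup>+u. \<integral>\<^sup>+v. f (u, v) * ?E r u * ?E r v \<partial>lborel \<partial>lborel)"
    by (intro nn_integral_cong, subst nn_integral_multc[symmetric]) (simp_all add: mult_ac)
  finally show ?thesis using True by simp
next
  case False
  have product_form: "(\<integral>\<^sup>+x. \<integral>\<^sup>+y. g (x, y) * ennreal (normal_density 0 s x) * ennreal (normal_density 0 s y) \<partial>lborel \<partial>lborel)
     = (\<integral>\<^sup>+x. \<integral>\<^sup>+y. g (x, y) * ennreal (normal_density 0 s x * normal_density 0 s y) \<partial>lborel \<partial>lborel)"
    for g :: "real \<times> real \<Rightarrow> ennreal" and s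
    by (intro nn_integral_cong) (simp add: ennreal_mult mult.assoc)
  show ?thesis
    unfolding product_form[of "\<lambda>p. f (\<alpha> * fst p + \<beta> * snd p, \<beta> * fst p - \<alpha> * snd p)", simplified]
      product_form[of f]
    by (rule nn_integral_normal_scaled_reflection_shear[OF f r ab False])
qed

definition isotropic_normal_pair :: "'w measure \<Rightarrow> ('w \<Rightarrow> real \<times> real) \<Rightarrow> real \<Rightarrow> bool" where
  "isotropic_normal_pair M V s \<longleftrightarrow> V \<in> borel_measurable M \<and>
     (\<forall>f :: real \<times> real \<Rightarrow> ennreal. f \<in> borel_measurable borel \<longrightarrow>
        (\<integral>\<^sup>+\<omega>. f (V \<omega>) \<partial>M) = (\<integral>\<^sup>+x. \<integral>\<^sup>+y. f (x, y) * ennreal (normal_density 0 s x) * ennreal (normal_density 0 s y) \<partial>lborel \<partial>lborel))"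

lemma isotropic_normal_pair_measurable:
  "isotropic_normal_pair M V s \<Longrightarrow> V \<in> borel_measurable M"
  unfolding isotropic_normal_pair_def by blast

lemma isotropic_normal_pair_nn_integral:
  assumes "isotropic_normal_pair M V s" "f \<in> borel_measurable borel"
  shows "(\<integral>\<^sup>+\<omega>. f (V \<omega>) \<partial>M) = (\<integral>\<^sup>+x. \<integral>\<^sup>+y. f (x, y) * ennreal (normal_density 0 s x) * ennreal (normal_density 0 s y) \<partial>lborel \<partial>lborel)"
  using assms unfolding isotropic_normal_pair_def by blast

lemma indep_var_nn_integral:
  fixes V W :: "'w \<Rightarrow> 'a::second_countable_topology"
  assumes "prob_space M" and ind: "prob_space.indep_var M borel V borel W"
    and f[measurable]: "f \<in> borel_measurable borel"
  shows "(\<integral>\<^sup>+\<omega>. f (V \<omega>, W \<omega>) \<partial>M) = (\<integral>\<^sup>+\<omega>. \<integral>\<^sup>+\<omega>'. f (V \<omega>, W \<omega>') \<partial>M \<partial>M)"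
proof -
  interpret prob_space M by fact
  have [measurable]: "f \<in> borel_measurable (borel \<Otimes>\<^sub>M borel)" using f by (simp add: borel_prod)
  have [measurable]: "V \<in> borel_measurable M" "W \<in> borel_measurable M"
    using ind indep_var_rv1 indep_var_rv2 by blast+
  interpret DW: prob_space "distr M borel W" by (rule prob_space_distr) simp
  interpret pair_sigma_finite "distr M borel V" "distr M borel W"
    by (intro pair_sigma_finite.intro prob_space_imp_sigma_finite prob_space_distr) simp_all
  have "(\<integral>\<^sup>+\<omega>. f (V \<omega>, W \<omega>) \<partial>M) = (\<integral>\<^sup>+p. f p \<partial>(distr M borel V \<Otimes>\<^sub>M distr M borel W))"
    using ind by (simp add: indep_var_distribution_eq nn_integral_distr)
  also have "\<dots> = (\<integral>\<^sup>+v. \<integral>\<^sup>+w. f (v, w) \<partial>distr M borel W \<partial>distr M borel V)"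
    using DW.nn_integral_fst[of f] by simp
  also have "\<dots> = (\<integral>\<^sup>+\<omega>. \<integral>\<^sup>+\<omega>'. f (V \<omega>, W \<omega>') \<partial>M \<partial>M)"
    by (simp add: nn_integral_distr)
  finally show ?thesis .
qed

lemma isotropic_normal_pair_add:
  assumes P: "prob_space M" and V: "isotropic_normal_pair M V s" and W: "isotropic_normal_pair M W r"
    and ind: "prob_space.indep_var M borel V borel W" and s: "s > 0" and r: "r > 0"
  shows "isotropic_normal_pair M (\<lambda>\<omega>. V \<omega> + W \<omega>) (sqrt (s\<^sup>2 + r\<^sup>2))"
  unfolding isotropic_normal_pair_def
proof (intro conjI allI impI)
  have [measurable]: "V \<in> borel_measurable M" "W \<in> borel_measurable M"
    using V W by (simp_all add: isotropic_normal_pair_measurable)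
  show "(\<lambda>\<omega>. V \<omega> + W \<omega>) \<in> borel_measurable M" by measurable
  fix f :: "real \<times> real \<Rightarrow> ennreal" assume f[measurable]: "f \<in> borel_measurable borel"
  let ?E = "\<lambda>s x. ennreal (normal_density 0 s x)"
  define G where "G v = (\<integral>\<^sup>+c. \<integral>\<^sup>+d. f (v + (c, d)) * ?E r c * ?E r d \<partial>lborel \<partial>lborel)" for v
  have [measurable]: "G \<in> borel_measurable borel" unfolding G_def by measurable
  have "(\<lambda>p. fst p + snd p) \<in> borel_measurable (borel :: ((real \<times> real) \<times> (real \<times> real)) measure)"
    by (intro borel_measurable_continuous_onI continuous_intros)
  then have "(\<lambda>p. f (fst p + snd p)) \<in> borel_measurable (borel :: ((real \<times> real) \<times> (real \<times> real)) measure)"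
    using f by (rule measurable_compose)
  then have "(\<integral>\<^sup>+\<omega>. f (V \<omega> + W \<omega>) \<partial>M) = (\<integral>\<^sup>+\<omega>. \<integral>\<^sup>+\<omega>'. f (V \<omega> + W \<omega>') \<partial>M \<partial>M)"
    using indep_var_nn_integral[OF P ind, of "\<lambda>p. f (fst p + snd p)"] by simp
  also have "\<dots> = (\<integral>\<^sup>+\<omega>. G (V \<omega>) \<partial>M)"
    unfolding G_def by (intro nn_integral_cong isotropic_normal_pair_nn_integral[OF W]) measurable
  also have "\<dots> = (\<integral>\<^sup>+a. \<integral>\<^sup>+b. G (a, b) * ?E s a * ?E s b \<partial>lborel \<partial>lborel)"
    by (rule isotropic_normal_pair_nn_integral[OF V]) measurable
  also have "\<dots> = (\<integral>\<^sup>+x. \<integral>\<^sup>+y. f (x, y) * ?E (sqrt (s\<^sup>2 + r\<^sup>2)) x * ?E (sqrt (s\<^sup>2 + r\<^sup>2)) y \<partial>lborel \<partial>lborel)"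
    unfolding G_def by (rule nn_integral_normal_pair_convolution[OF f s r])
  finally show "(\<integral>\<^sup>+\<omega>. f (V \<omega> + W \<omega>) \<partial>M) = \<dots>" .
qed

lemma isotropic_normal_pair_of_indep:
  assumes P: "prob_space M" and ind: "prob_space.indep_var M borel R borel J"
    and R: "distributed M lborel R (\<lambda>x. ennreal (std_normal_density x))"
    and J: "distributed M lborel J (\<lambda>x. ennreal (std_normal_density x))"
  shows "isotropic_normal_pair M (\<lambda>\<omega>. (R \<omega>, J \<omega>)) 1"
  unfolding isotropic_normal_pair_def
proof (intro conjI allI impI)
  interpret prob_space M by fact
  have [measurable]: "R \<in> borel_measurable M" "J \<in> borel_measurable M"
    using ind indep_var_rv1 indep_var_rv2 by blast+
  show "(\<lambda>\<omega>. (R \<omega>, J \<omega>)) \<in> borel_measurable M" by measurable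
  fix f :: "real \<times> real \<Rightarrow> ennreal" assume f[measurable]: "f \<in> borel_measurable borel"
  have "(\<integral>\<^sup>+\<omega>. f (R \<omega>, J \<omega>) \<partial>M) = (\<integral>\<^sup>+\<omega>. \<integral>\<^sup>+\<omega>'. f (R \<omega>, J \<omega>') \<partial>M \<partial>M)"
    by (rule indep_var_nn_integral[OF P ind f])
  also have "\<dots> = (\<integral>\<^sup>+\<omega>. \<integral>\<^sup>+y. ennreal (std_normal_density y) * f (R \<omega>, y) \<partial>lborel \<partial>M)"
    by (intro nn_integral_cong distributed_nn_integral[OF J, symmetric]) measurable
  also have "\<dots> = (\<integral>\<^sup>+x. ennreal (std_normal_density x) * (\<integral>\<^sup>+y. ennreal (std_normal_density y) * f (x, y) \<partial>lborel) \<partial>lborel)"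
    by (rule distributed_nn_integral[OF R, symmetric]) measurable
  also have "\<dots> = (\<integral>\<^sup>+x. \<integral>\<^sup>+y. f (x, y) * ennreal (normal_density 0 1 x) * ennreal (normal_density 0 1 y) \<partial>lborel \<partial>lborel)"
    by (intro nn_integral_cong, subst nn_integral_cmult[symmetric], measurable,
        intro nn_integral_cong) (simp add: mult_ac)
  finally show "(\<integral>\<^sup>+\<omega>. f (R \<omega>, J \<omega>) \<partial>M) = \<dots>" .
qed

lemma isotropic_normal_pair_scaled_reflection:
  assumes V: "isotropic_normal_pair M V 1" and r: "r > 0" and ab: "\<alpha>\<^sup>2 + \<beta>\<^sup>2 = r\<^sup>2"
  shows "isotropic_normal_pair M (\<lambda>\<omega>. (\<alpha> * fst (V \<omega>) + \<beta> * snd (V \<omega>), \<beta> * fst (V \<omega>) - \<alpha> * snd (V \<omega>))) r"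
  unfolding isotropic_normal_pair_def
proof (intro conjI allI impI)
  have "V \<in> borel_measurable M" using V by (rule isotropic_normal_pair_measurable)
  then have [measurable]: "V \<in> M \<rightarrow>\<^sub>M borel \<Otimes>\<^sub>M borel" by (simp add: borel_prod)
  show "(\<lambda>\<omega>. (\<alpha> * fst (V \<omega>) + \<beta> * snd (V \<omega>), \<beta> * fst (V \<omega>) - \<alpha> * snd (V \<omega>))) \<in> borel_measurable M"
    by measurable
  fix f :: "real \<times> real \<Rightarrow> ennreal" assume f[measurable]: "f \<in> borel_measurable borel"
  have "(\<integral>\<^sup>+\<omega>. f (\<alpha> * fst (V \<omega>) + \<beta> * snd (V \<omega>), \<beta> * fst (V \<omega>) - \<alpha> * snd (V \<omega>)) \<partial>M)
     = (\<integral>\<^sup>+x. \<integral>\<^sup>+y. f (\<alpha> * x + \<beta> * y, \<beta> * x - \<alpha> * y) * ennreal (normal_density 0 1 x) * ennreal (normal_density 0 1 y) \<partial>lborel \<partial>lborel)"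
    using isotropic_normal_pair_nn_integral[OF V, of "\<lambda>p. f (\<alpha> * fst p + \<beta> * snd p, \<beta> * fst p - \<alpha> * snd p)"]
    by (simp add: borel_prod[symmetric])
  also have "\<dots> = (\<integral>\<^sup>+x. \<integral>\<^sup>+y. f (x, y) * ennreal (normal_density 0 r x) * ennreal (normal_density 0 r y) \<partial>lborel \<partial>lborel)"
    by (rule nn_integral_normal_scaled_reflection[OF f r ab])
  finally show "(\<integral>\<^sup>+\<omega>. f (\<alpha> * fst (V \<omega>) + \<beta> * snd (V \<omega>), \<beta> * fst (V \<omega>) - \<alpha> * snd (V \<omega>)) \<partial>M) = \<dots>" .
qed

lemma nn_integral_abs_eq_twice_nonneg:
  fixes g :: "real \<Rightarrow> ennreal"
  assumes g[measurable]: "g \<in> borel_measurable borel"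
  shows "(\<integral>\<^sup>+x. g \<bar>x\<bar> \<partial>lborel) = 2 * (\<integral>\<^sup>+x. g x * indicator {0..} x \<partial>lborel)"
proof -
  have "(\<integral>\<^sup>+x. g \<bar>x\<bar> \<partial>lborel) = (\<integral>\<^sup>+x. g x * indicator {0..} x + g (- x) * indicator {..<0} x \<partial>lborel)"
    by (rule nn_integral_cong) (auto split: split_indicator)
  also have "\<dots> = (\<integral>\<^sup>+x. g x * indicator {0..} x \<partial>lborel) + (\<integral>\<^sup>+x. g (- x) * indicator {..<0} x \<partial>lborel)"
    by (rule nn_integral_add) measurable
  also have "(\<integral>\<^sup>+x. g (- x) * indicator {..<0} x \<partial>lborel) = (\<integral>\<^sup>+x. g x * indicator {0<..} x \<partial>lborel)"
  proof -
    have "(\<integral>\<^sup>+x. g x * indicator {0<..} x \<partial>lborel) = ennreal \<bar>-1\<bar> * (\<integral>\<^sup>+x. g (0 + -1 * x) * indicator {0<..} (0 + -1 * x) \<partial>lborel)"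
      by (rule nn_integral_real_affine) auto
    also have "\<dots> = (\<integral>\<^sup>+x. g (- x) * indicator {..<0} x \<partial>lborel)"
      by (auto intro!: nn_integral_cong split: split_indicator)
    finally show ?thesis ..
  qed
  also have "(\<integral>\<^sup>+x. g x * indicator {0<..} x \<partial>lborel) = (\<integral>\<^sup>+x. g x * indicator {0..} x \<partial>lborel)"
    by (intro nn_integral_cong_AE eventually_mono[OF AE_lborel_singleton[of 0]]) (auto split: split_indicator)
  finally show ?thesis by (simp add: mult_2)
qed

lemma nn_integral_inverse_one_plus_square: "(\<integral>\<^sup>+s. ennreal (1 / (1 + s\<^sup>2)) \<partial>lborel) = ennreal pi"
proof -
  have "(\<integral>\<^sup>+s. ennreal (1 / (1 + s\<^sup>2)) \<partial>lborel) = (\<integral>\<^sup>+s. (\<lambda>z. ennreal (1 / (1 + z\<^sup>2))) \<bar>s\<bar> \<partial>lborel)"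
    by simp
  also have "\<dots> = 2 * (\<integral>\<^sup>+s. ennreal (1 / (1 + s\<^sup>2)) * indicator {0..} s \<partial>lborel)"
    by (rule nn_integral_abs_eq_twice_nonneg) measurable
  also have "(\<integral>\<^sup>+s. ennreal (1 / (1 + s\<^sup>2)) * indicator {0..} s \<partial>lborel) = ennreal (pi / 2)"
  proof (subst nn_integral_FTC_atLeast[where F=arctan and T="pi/2"])
    show "(arctan \<longlongrightarrow> pi / 2) at_top" by (rule tendsto_arctan_at_top)
  qed (auto intro!: derivative_eq_intros simp: add_nonneg_eq_0_iff field_simps power2_eq_square)
  also have "2 * ennreal (pi / 2) = ennreal pi"
  proof -
    have "ennreal (2 * (pi / 2)) = ennreal 2 * ennreal (pi / 2)" by (rule ennreal_mult) auto
    then show ?thesis by simp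
  qed
  finally show ?thesis .
qed

lemma nn_integral_rayleigh_atLeast:
  assumes c: "c > 0" and a: "a \<ge> 0"
  shows "(\<integral>\<^sup>+x. ennreal (x * exp (- (x\<^sup>2 * c) / 2) / (2 * pi)) * indicator {a..} x \<partial>lborel)
       = ennreal (exp (- (a\<^sup>2 * c) / 2) / (2 * pi * c))"
proof -
  have "(\<integral>\<^sup>+x. ennreal (x * exp (- (x\<^sup>2 * c) / 2) / (2 * pi)) * indicator {a..} x \<partial>lborel)
      = ennreal (0 - (- exp (- (a\<^sup>2 * c) / 2) / (2 * pi * c)))"
  proof (rule nn_integral_FTC_atLeast)
    show "((\<lambda>x. - exp (- (x\<^sup>2 * c) / 2) / (2 * pi * c)) \<longlongrightarrow> 0) at_top"
      using c by real_asymp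
    fix x :: real assume "a \<le> x"
    then show "0 \<le> x * exp (- (x\<^sup>2 * c) / 2) / (2 * pi)" using a by simp
    show "((\<lambda>x. - exp (- (x\<^sup>2 * c) / 2) / (2 * pi * c)) has_real_derivative x * exp (- (x\<^sup>2 * c) / 2) / (2 * pi)) (at x)"
      using c by (auto intro!: derivative_eq_intros simp: field_simps power2_eq_square)
  qed measurable
  then show ?thesis by simp
qed

lemma nn_integral_rayleigh_tail:
  assumes c: "c > 0" and t: "t \<ge> 0"
  shows "(\<integral>\<^sup>+x. ennreal (\<bar>x\<bar> * exp (- (x\<^sup>2 * c) / 2) / (2 * pi)) * indicator {x. t < x\<^sup>2 * c} x \<partial>lborel)
       = ennreal (exp (- t / 2) / (pi * c))"
proof -
  define a where "a = sqrt (t / c)"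
  have a: "a \<ge> 0" and a2: "a\<^sup>2 * c = t" using c t by (simp_all add: a_def)
  let ?g = "\<lambda>z. ennreal (z * exp (- (z\<^sup>2 * c) / 2) / (2 * pi)) * indicator {x. t < x\<^sup>2 * c} z"
  have "(\<integral>\<^sup>+x. ennreal (\<bar>x\<bar> * exp (- (x\<^sup>2 * c) / 2) / (2 * pi)) * indicator {x. t < x\<^sup>2 * c} x \<partial>lborel)
      = (\<integral>\<^sup>+x. ?g \<bar>x\<bar> \<partial>lborel)"
    by (rule nn_integral_cong) (simp add: indicator_def)
  also have "\<dots> = 2 * (\<integral>\<^sup>+x. ?g x * indicator {0..} x \<partial>lborel)"
    by (rule nn_integral_abs_eq_twice_nonneg) measurable
  also have "(\<integral>\<^sup>+x. ?g x * indicator {0..} x \<partial>lborel)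
      = (\<integral>\<^sup>+x. ennreal (x * exp (- (x\<^sup>2 * c) / 2) / (2 * pi)) * indicator {a..} x \<partial>lborel)"
  proof (intro nn_integral_cong_AE eventually_mono[OF AE_lborel_singleton[of a]] impI)
    fix x :: real assume "x \<noteq> a"
    have "t < x\<^sup>2 * c \<longleftrightarrow> a\<^sup>2 < x\<^sup>2" using c by (simp add: a2[symmetric])
    moreover have "(0 \<le> x \<and> a\<^sup>2 < x\<^sup>2) \<longleftrightarrow> a \<le> x"
    proof
      assume "0 \<le> x \<and> a\<^sup>2 < x\<^sup>2"
      then show "a \<le> x" using a by (meson less_imp_le power2_less_imp_less)
    next
      assume "a \<le> x"
      then have "a < x" using \<open>x \<noteq> a\<close> by simp
      then show "0 \<le> x \<and> a\<^sup>2 < x\<^sup>2" using a by (simp add: power_strict_mono)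
    qed
    ultimately show "?g x * indicator {0..} x = ennreal (x * exp (- (x\<^sup>2 * c) / 2) / (2 * pi)) * indicator {a..} x"
      by (auto simp: indicator_def)
  qed
  also have "\<dots> = ennreal (exp (- t / 2) / (2 * pi * c))"
    using nn_integral_rayleigh_atLeast[OF c a] by (simp add: a2)
  also have "2 * \<dots> = ennreal (exp (- t / 2) / (pi * c))"
  proof -
    have "ennreal (2 * (exp (- t / 2) / (2 * pi * c))) = ennreal 2 * ennreal (exp (- t / 2) / (2 * pi * c))"
      by (rule ennreal_mult) (use c in auto)
    then show ?thesis using c by simp
  qed
  finally show ?thesis .
qed

lemma nn_integral_std_normal_pair_tail_slice:
  assumes t: "t \<ge> 0"
  shows "(\<integral>\<^sup>+x. ennreal \<bar>x\<bar> * (ennreal (normal_density 0 1 x) * ennreal (normal_density 0 1 (x * s)))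
           * indicator {p. t < (fst p)\<^sup>2 + (snd p)\<^sup>2} (x, x * s) \<partial>lborel)
       = ennreal (exp (- t / 2) / pi) * ennreal (1 / (1 + s\<^sup>2))"
proof -
  have c: "1 + s\<^sup>2 > 0" by (simp add: add_pos_nonneg)
  have "(\<integral>\<^sup>+x. ennreal \<bar>x\<bar> * (ennreal (normal_density 0 1 x) * ennreal (normal_density 0 1 (x * s)))
           * indicator {p. t < (fst p)\<^sup>2 + (snd p)\<^sup>2} (x, x * s) \<partial>lborel)
      = (\<integral>\<^sup>+x. ennreal (\<bar>x\<bar> * exp (- (x\<^sup>2 * (1 + s\<^sup>2)) / 2) / (2 * pi)) * indicator {x. t < x\<^sup>2 * (1 + s\<^sup>2)} x \<partial>lborel)"
  proof (rule nn_integral_cong)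
    fix x :: real
    have e: "x\<^sup>2 + (x * s)\<^sup>2 = x\<^sup>2 * (1 + s\<^sup>2)" by (simp add: algebra_simps power_mult_distrib)
    have "normal_density 0 1 x * normal_density 0 1 (x * s) = exp (- (x\<^sup>2 * (1 + s\<^sup>2)) / 2) / (2 * pi)"
      using normal_density_mult_normal_density[of 1 x "x * s"] unfolding e by simp
    then have "ennreal \<bar>x\<bar> * (ennreal (normal_density 0 1 x) * ennreal (normal_density 0 1 (x * s)))
        = ennreal (\<bar>x\<bar> * exp (- (x\<^sup>2 * (1 + s\<^sup>2)) / 2) / (2 * pi))"
      by (simp add: ennreal_mult'[symmetric])
    moreover have "indicator {p. t < (fst p)\<^sup>2 + (snd p)\<^sup>2} (x, x * s) = (indicator {x. t < x\<^sup>2 * (1 + s\<^sup>2)} x :: ennreal)"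
      by (simp add: indicator_def e)
    ultimately show "ennreal \<bar>x\<bar> * (ennreal (normal_density 0 1 x) * ennreal (normal_density 0 1 (x * s)))
           * indicator {p. t < (fst p)\<^sup>2 + (snd p)\<^sup>2} (x, x * s)
        = ennreal (\<bar>x\<bar> * exp (- (x\<^sup>2 * (1 + s\<^sup>2)) / 2) / (2 * pi)) * indicator {x. t < x\<^sup>2 * (1 + s\<^sup>2)} x"
      by simp
  qed
  also have "\<dots> = ennreal (exp (- t / 2) / (pi * (1 + s\<^sup>2)))"
    by (rule nn_integral_rayleigh_tail[OF c t])
  also have "\<dots> = ennreal (exp (- t / 2) / pi) * ennreal (1 / (1 + s\<^sup>2))"
    using c by (simp add: ennreal_mult'[symmetric])
  finally show ?thesis .
qed

text \<open>Polar coordinates in disguise: substituting \<open>y = x s\<close> and integrating first over \<open>x\<close>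
  leaves the Cauchy integral \<open>\<integral> 1 / (1 + s\<^sup>2) ds = \<pi>\<close>.\<close>

lemma nn_integral_std_normal_pair_tail:
  assumes t: "t \<ge> 0"
  shows "(\<integral>\<^sup>+x. \<integral>\<^sup>+y. indicator {p. t < (fst p)\<^sup>2 + (snd p)\<^sup>2} (x, y) * ennreal (normal_density 0 1 x) * ennreal (normal_density 0 1 y) \<partial>lborel \<partial>lborel)
       = ennreal (exp (- t / 2))"
proof -
  let ?S = "{p :: real \<times> real. t < (fst p)\<^sup>2 + (snd p)\<^sup>2}" and ?E = "\<lambda>x. ennreal (normal_density 0 1 x)"
  have [measurable]: "(\<lambda>z. indicator ?S (f z, g z) :: ennreal) \<in> borel_measurable N"
    if [measurable]: "f \<in> borel_measurable N" "g \<in> borel_measurable N" for f g and N :: "'n measure"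
    by measurable
  have "(\<integral>\<^sup>+y. indicator ?S (x, y) * ?E x * ?E y \<partial>lborel)
      = (\<integral>\<^sup>+s. ennreal \<bar>x\<bar> * (?E x * ?E (x * s)) * indicator ?S (x, x * s) \<partial>lborel)" if "x \<noteq> 0" for x
    by (rule nn_integral_lborel_affine_subst[OF that, where t=0]) (simp add: mult_ac, measurable)
  then have "AE x in lborel. (\<integral>\<^sup>+y. indicator ?S (x, y) * ?E x * ?E y \<partial>lborel)
      = (\<integral>\<^sup>+s. ennreal \<bar>x\<bar> * (?E x * ?E (x * s)) * indicator ?S (x, x * s) \<partial>lborel)"
    using AE_lborel_singleton[of 0] by (auto elim: eventually_mono)
  then have "(\<integral>\<^sup>+x. \<integral>\<^sup>+y. indicator ?S (x, y) * ?E x * ?E y \<partial>lborel \<partial>lborel)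
      = (\<integral>\<^sup>+x. \<integral>\<^sup>+s. ennreal \<bar>x\<bar> * (?E x * ?E (x * s)) * indicator ?S (x, x * s) \<partial>lborel \<partial>lborel)"
    by (rule nn_integral_cong_AE)
  also have "\<dots> = (\<integral>\<^sup>+s. \<integral>\<^sup>+x. ennreal \<bar>x\<bar> * (?E x * ?E (x * s)) * indicator ?S (x, x * s) \<partial>lborel \<partial>lborel)"
    by (rule lborel_pair.Fubini') measurable
  also have "\<dots> = (\<integral>\<^sup>+s. ennreal (exp (- t / 2) / pi) * ennreal (1 / (1 + s\<^sup>2)) \<partial>lborel)"
    by (intro nn_integral_cong nn_integral_std_normal_pair_tail_slice[OF t])
  also have "\<dots> = ennreal (exp (- t / 2) / pi) * ennreal pi"
    by (subst nn_integral_cmult) (auto simp: nn_integral_inverse_one_plus_square)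
  also have "\<dots> = ennreal (exp (- t / 2))"
    by (simp add: ennreal_mult'[symmetric])
  finally show ?thesis .
qed

lemma isotropic_normal_pair_norm_le:
  assumes "prob_space M" and V: "isotropic_normal_pair M V 1" and t: "t \<ge> 0"
  shows "measure M {\<omega> \<in> space M. (fst (V \<omega>))\<^sup>2 + (snd (V \<omega>))\<^sup>2 \<le> t} = 1 - exp (- t / 2)"
proof -
  interpret prob_space M by fact
  have [measurable]: "V \<in> borel_measurable M" using V by (rule isotropic_normal_pair_measurable)
  define S where "S = {p :: real \<times> real. t < (fst p)\<^sup>2 + (snd p)\<^sup>2}"
  have [measurable]: "S \<in> sets borel" unfolding S_def by (intro borel_open open_Collect_less continuous_intros)
  have "emeasure M (V -` S \<inter> space M) = (\<integral>\<^sup>+\<omega>. indicator (V -` S \<inter> space M) \<omega> \<partial>M)"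
    by (rule nn_integral_indicator[symmetric]) measurable
  also have "\<dots> = (\<integral>\<^sup>+\<omega>. indicator S (V \<omega>) \<partial>M)"
    by (rule nn_integral_cong) (simp add: indicator_def)
  also have "\<dots> = ennreal (exp (- t / 2))"
    unfolding isotropic_normal_pair_nn_integral[OF V borel_measurable_indicator[OF \<open>S \<in> sets borel\<close>]]
    unfolding S_def by (rule nn_integral_std_normal_pair_tail[OF t])
  finally have "measure M (V -` S \<inter> space M) = exp (- t / 2)"
    by (simp add: measure_def)
  moreover have "{\<omega> \<in> space M. (fst (V \<omega>))\<^sup>2 + (snd (V \<omega>))\<^sup>2 \<le> t} = space M - (V -` S \<inter> space M)"
    by (auto simp: S_def)
  ultimately show ?thesis by (simp add: prob_compl)
qed

definition re_im :: "complex \<Rightarrow> real \<times> real" where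
  "re_im z = (Re z, Im z)"

lemma re_im_add [simp]: "re_im (z + w) = re_im z + re_im w"
  by (simp add: re_im_def)

lemma norm_re_im: "(fst (re_im z))\<^sup>2 + (snd (re_im z))\<^sup>2 = (cmod z)\<^sup>2"
  by (simp add: re_im_def cmod_power2)

lemma borel_measurable_re_im [measurable]: "re_im \<in> borel_measurable borel"
  unfolding re_im_def borel_prod[symmetric] by measurable

lemma borel_measurable_cnj [measurable]: "cnj \<in> borel_measurable borel"
  by (intro borel_measurable_continuous_onI continuous_intros)

definition entry_coord :: "('w \<Rightarrow> nat \<Rightarrow> nat \<Rightarrow> complex) \<Rightarrow> nat \<times> nat \<times> bool \<Rightarrow> 'w \<Rightarrow> real" where
  "entry_coord A = (\<lambda>(k, j, re) \<omega>. if re then Re (A \<omega> k j) else Im (A \<omega> k j))"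

text \<open>Reassembles complex entries from a vector of real coordinates: every quantity attached to a
  column is thus a function of a restriction of \<open>entry_coord A\<close>, which transfers independence.\<close>

definition complex_entries :: "(nat \<times> nat \<times> bool \<Rightarrow> real) \<Rightarrow> nat \<Rightarrow> nat \<Rightarrow> complex" where
  "complex_entries f k j = Complex (f (k, j, True)) (f (k, j, False))"

definition column_inner :: "(nat \<Rightarrow> nat \<Rightarrow> complex) \<Rightarrow> (nat \<Rightarrow> complex) \<Rightarrow> nat \<Rightarrow> nat \<Rightarrow> complex" where
  "column_inner a x0 j m = (\<Sum>k<m. cnj (a k j) * x0 k)"

lemma bval_eq_column_inner: "bval n a x0 j = cmod (column_inner a x0 j n)"
  by (simp add: bval_def column_inner_def)

lemma column_inner_Suc: "column_inner a x0 j (Suc m) = column_inner a x0 j m + cnj (a m j) * x0 m"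
  by (simp add: column_inner_def)

lemma column_inner_restrict_entry_coord:
  assumes "{..<m} \<times> {j} \<times> UNIV \<subseteq> S"
  shows "column_inner (complex_entries (restrict (\<lambda>i. entry_coord A i \<omega>) S)) x0 j m = column_inner (A \<omega>) x0 j m"
  using assms by (auto simp: column_inner_def complex_entries_def entry_coord_def subset_eq intro!: sum.cong)

lemma measurable_complex_entries [measurable]:
  assumes "{k} \<times> {j} \<times> UNIV \<subseteq> S"
  shows "(\<lambda>f. complex_entries f k j) \<in> borel_measurable (PiM S (\<lambda>_. borel))"
  using assms unfolding complex_entries_def borel_measurable_complex_iff
  by (auto intro!: measurable_component_singleton)

lemma measurable_column_inner_complex_entries:
  assumes "{..<m} \<times> {j} \<times> UNIV \<subseteq> S"
  shows "(\<lambda>f. column_inner (complex_entries f) x0 j m) \<in> borel_measurable (PiM S (\<lambda>_. borel))"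
  unfolding column_inner_def using assms
  by (intro borel_measurable_sum borel_measurable_times borel_measurable_const
      measurable_compose[OF measurable_complex_entries borel_measurable_cnj]) auto

context
  fixes M :: "'w measure" and A :: "'w \<Rightarrow> nat \<Rightarrow> nat \<Rightarrow> complex" and n N :: nat
  assumes P: "prob_space M" and G: "iid_complex_gaussian_matrix M A n N"
begin

interpretation prob_space M by (rule P)

lemma indep_vars_entry_coord: "indep_vars (\<lambda>_. borel) (entry_coord A) ({..<n} \<times> {..<N} \<times> UNIV)"
  using G unfolding iid_complex_gaussian_matrix_def entry_coord_def by simp

lemma indep_var_restrict_entry_coord:
  assumes "S \<subseteq> {..<n} \<times> {..<N} \<times> UNIV" "T \<subseteq> {..<n} \<times> {..<N} \<times> UNIV" "S \<inter> T = {}"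
  shows "indep_var (PiM S (\<lambda>_. borel)) (\<lambda>\<omega>. restrict (\<lambda>i. entry_coord A i \<omega>) S)
                   (PiM T (\<lambda>_. borel)) (\<lambda>\<omega>. restrict (\<lambda>i. entry_coord A i \<omega>) T)"
  using assms by (intro indep_var_restrict[OF indep_vars_entry_coord]) auto

lemma isotropic_normal_pair_entry:
  assumes "k < n" "j < N"
  shows "isotropic_normal_pair M (\<lambda>\<omega>. re_im (A \<omega> k j)) 1"
proof -
  have "indep_var (PiM {(k, j, True)} (\<lambda>_. borel)) (\<lambda>\<omega>. restrict (\<lambda>i. entry_coord A i \<omega>) {(k, j, True)})
                  (PiM {(k, j, False)} (\<lambda>_. borel)) (\<lambda>\<omega>. restrict (\<lambda>i. entry_coord A i \<omega>) {(k, j, False)})"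
    using assms by (intro indep_var_restrict_entry_coord) auto
  then have "indep_var borel ((\<lambda>f. f (k, j, True)) \<circ> (\<lambda>\<omega>. restrict (\<lambda>i. entry_coord A i \<omega>) {(k, j, True)}))
                  borel ((\<lambda>f. f (k, j, False)) \<circ> (\<lambda>\<omega>. restrict (\<lambda>i. entry_coord A i \<omega>) {(k, j, False)}))"
    by (rule indep_var_compose) (auto intro!: measurable_component_singleton)
  then have "indep_var borel (\<lambda>\<omega>. Re (A \<omega> k j)) borel (\<lambda>\<omega>. Im (A \<omega> k j))"
    by (simp add: comp_def entry_coord_def)
  moreover have "distributed M lborel (\<lambda>\<omega>. Re (A \<omega> k j)) (\<lambda>x. ennreal (std_normal_density x))"
    "distributed M lborel (\<lambda>\<omega>. Im (A \<omega> k j)) (\<lambda>x. ennreal (std_normal_density x))"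
    using G assms unfolding iid_complex_gaussian_matrix_def by auto
  ultimately show ?thesis
    unfolding re_im_def by (rule isotropic_normal_pair_of_indep[OF P])
qed

lemma isotropic_normal_pair_entry_times:
  assumes "k < n" "j < N" "x \<noteq> 0"
  shows "isotropic_normal_pair M (\<lambda>\<omega>. re_im (cnj (A \<omega> k j) * x)) (cmod x)"
proof -
  have "(Re x)\<^sup>2 + (Im x)\<^sup>2 = (cmod x)\<^sup>2" by (simp add: cmod_power2)
  from isotropic_normal_pair_scaled_reflection[OF isotropic_normal_pair_entry[OF assms(1,2)] _ this] assms(3)
  show ?thesis by (simp add: re_im_def mult.commute)
qed

lemma indep_var_column_inner_entry:
  assumes "m < n" "j < N"
  shows "indep_var borel (\<lambda>\<omega>. re_im (column_inner (A \<omega>) x0 j m)) borel (\<lambda>\<omega>. re_im (cnj (A \<omega> m j) * x))"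
proof -
  let ?S = "{..<m} \<times> {j} \<times> (UNIV :: bool set)" and ?T = "{m} \<times> {j} \<times> (UNIV :: bool set)"
  let ?Y = "\<lambda>S \<omega>. restrict (\<lambda>i. entry_coord A i \<omega>) S"
  have "indep_var borel ((\<lambda>f. re_im (column_inner (complex_entries f) x0 j m)) \<circ> ?Y ?S)
                  borel ((\<lambda>f. re_im (cnj (complex_entries f m j) * x)) \<circ> ?Y ?T)"
    using assms
    by (intro indep_var_compose[OF indep_var_restrict_entry_coord]
        measurable_compose[OF measurable_column_inner_complex_entries borel_measurable_re_im]) auto
  then show ?thesis
    by (simp add: comp_def column_inner_restrict_entry_coord) (simp add: complex_entries_def entry_coord_def)
qed

lemma isotropic_normal_pair_column_inner_Suc:
  assumes "m < n" "j < N" and V: "isotropic_normal_pair M (\<lambda>\<omega>. re_im (column_inner (A \<omega>) x0 j m)) s"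
    and "s > 0" "x0 m \<noteq> 0"
  shows "isotropic_normal_pair M (\<lambda>\<omega>. re_im (column_inner (A \<omega>) x0 j (Suc m))) (sqrt (s\<^sup>2 + (cmod (x0 m))\<^sup>2))"
  unfolding column_inner_Suc re_im_add
  using assms by (intro isotropic_normal_pair_add[OF P V isotropic_normal_pair_entry_times indep_var_column_inner_entry]) auto

lemma isotropic_normal_pair_column_inner:
  assumes j: "j < N"
  shows "m \<le> n \<Longrightarrow> (\<Sum>k<m. (cmod (x0 k))\<^sup>2) > 0 \<Longrightarrow>
    isotropic_normal_pair M (\<lambda>\<omega>. re_im (column_inner (A \<omega>) x0 j m)) (sqrt (\<Sum>k<m. (cmod (x0 k))\<^sup>2))"
proof (induction m)
  case 0
  then show ?case by simp
next
  case (Suc m)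
  let ?s = "\<Sum>k<m. (cmod (x0 k))\<^sup>2"
  have m: "m < n" using Suc.prems by simp
  have "?s \<ge> 0" by (simp add: sum_nonneg)
  then consider "x0 m = 0" | "x0 m \<noteq> 0" "?s > 0" | "x0 m \<noteq> 0" "?s = 0" by linarith
  then show ?case
  proof cases
    case 1
    then show ?thesis using Suc by (simp add: column_inner_Suc)
  next
    case 2
    then show ?thesis
      using isotropic_normal_pair_column_inner_Suc[OF m j Suc.IH] Suc.prems by simp
  next
    case 3
    then have "x0 k = 0" if "k < m" for k
      using that sum_nonneg_eq_0_iff[of "{..<m}" "\<lambda>k. (cmod (x0 k))\<^sup>2"] by simp
    then have "column_inner (A \<omega>) x0 j (Suc m) = cnj (A \<omega> m j) * x0 m" for \<omega>
      by (simp add: column_inner_def)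
    then show ?thesis
      using isotropic_normal_pair_entry_times[OF m j] 3 by simp
  qed
qed

lemma measurable_restrict_entry_coord:
  assumes "S \<subseteq> {..<n} \<times> {..<N} \<times> UNIV"
  shows "(\<lambda>\<omega>. restrict (\<lambda>i. entry_coord A i \<omega>) S) \<in> M \<rightarrow>\<^sub>M PiM S (\<lambda>_. borel)"
  using indep_vars_entry_coord assms unfolding indep_vars_def by (auto intro!: measurable_restrict)

lemma borel_measurable_bval [measurable]:
  assumes "j < N"
  shows "(\<lambda>\<omega>. bval n (A \<omega>) x0 j) \<in> borel_measurable M"
proof -
  let ?S = "{..<n} \<times> {j} \<times> (UNIV :: bool set)"
  have "(\<lambda>\<omega>. restrict (\<lambda>i. entry_coord A i \<omega>) ?S) \<in> M \<rightarrow>\<^sub>M PiM ?S (\<lambda>_. borel)"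
    using assms by (intro measurable_restrict_entry_coord) auto
  moreover have "(\<lambda>f. column_inner (complex_entries f) x0 j n) \<in> borel_measurable (PiM ?S (\<lambda>_. borel))"
    by (rule measurable_column_inner_complex_entries) auto
  ultimately have "(\<lambda>\<omega>. column_inner (complex_entries (restrict (\<lambda>i. entry_coord A i \<omega>) ?S)) x0 j n) \<in> borel_measurable M"
    by (rule measurable_compose)
  then have "(\<lambda>\<omega>. cmod (column_inner (complex_entries (restrict (\<lambda>i. entry_coord A i \<omega>) ?S)) x0 j n)) \<in> borel_measurable M"
    by measurable
  then show ?thesis
    by (simp add: bval_eq_column_inner column_inner_restrict_entry_coord)
qed

lemma indep_vars_bval_sq: "indep_vars (\<lambda>_. borel) (\<lambda>j \<omega>. (bval n (A \<omega>) x0 j)\<^sup>2) {..<N}"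
proof -
  let ?S = "\<lambda>j. {..<n} \<times> {j} \<times> (UNIV :: bool set)"
  have "indep_vars (\<lambda>j. PiM (?S j) (\<lambda>_. borel)) (\<lambda>j \<omega>. restrict (\<lambda>i. entry_coord A i \<omega>) (?S j)) {..<N}"
    by (rule indep_vars_restrict[OF indep_vars_entry_coord]) (auto simp: disjoint_family_on_def)
  then have "indep_vars (\<lambda>_. borel)
      (\<lambda>j \<omega>. (cmod (column_inner (complex_entries (restrict (\<lambda>i. entry_coord A i \<omega>) (?S j))) x0 j n))\<^sup>2) {..<N}"
  proof (rule indep_vars_compose2)
    fix j
    have [measurable]: "(\<lambda>f. column_inner (complex_entries f) x0 j n) \<in> borel_measurable (PiM (?S j) (\<lambda>_. borel))"
      by (rule measurable_column_inner_complex_entries) auto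
    show "(\<lambda>f. (cmod (column_inner (complex_entries f) x0 j n))\<^sup>2) \<in> borel_measurable (PiM (?S j) (\<lambda>_. borel))"
      by measurable
  qed
  then show ?thesis
    by (simp add: bval_eq_column_inner column_inner_restrict_entry_coord)
qed

lemma bval_sq_le_prob:
  assumes "j < N" and "cvec_norm n x0 = 1" and "t \<ge> 0"
  shows "measure M {\<omega> \<in> space M. (bval n (A \<omega>) x0 j)\<^sup>2 \<le> t} = 1 - exp (- t / 2)"
proof -
  have "(\<Sum>k<n. (cmod (x0 k))\<^sup>2) = 1"
    using assms(2) unfolding cvec_norm_def by simp
  then have "isotropic_normal_pair M (\<lambda>\<omega>. re_im (column_inner (A \<omega>) x0 j n)) 1"
    using isotropic_normal_pair_column_inner[OF assms(1), of n x0] by simp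
  from isotropic_normal_pair_norm_le[OF P this assms(3)] show ?thesis
    by (simp add: norm_re_im bval_eq_column_inner)
qed

end

lemma smallest_subset_or_superset:
  fixes b :: "nat \<Rightarrow> real"
  assumes "I \<subseteq> {..<N}" and "\<forall>i\<in>I. \<forall>j\<in>{..<N} - I. b i \<le> b j"
    and down: "\<And>i j. P j \<Longrightarrow> b i \<le> b j \<Longrightarrow> P i"
  shows "I \<subseteq> {j \<in> {..<N}. P j} \<or> {j \<in> {..<N}. P j} \<subseteq> I"
proof (rule disjCI)
  assume "\<not> {j \<in> {..<N}. P j} \<subseteq> I"
  then obtain j where "j < N" "P j" "j \<notin> I" by auto
  then show "I \<subseteq> {j \<in> {..<N}. P j}"
    using assms by (auto intro: down)
qed

lemma mean_le_mean_of_superset: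
  fixes f :: "nat \<Rightarrow> real"
  assumes H: "finite H" and IH: "I \<subseteq> H" and I: "I \<noteq> {}"
    and smaller: "\<And>i j. i \<in> I \<Longrightarrow> j \<in> H - I \<Longrightarrow> f i \<le> f j"
  shows "(\<Sum>i\<in>I. f i) / real (card I) \<le> (\<Sum>i\<in>H. f i) / real (card H)"
proof -
  have fI: "finite I" using H IH finite_subset by blast
  define c where "c = Max (f ` I)"
  have "f i \<le> c" if "i \<in> I" for i unfolding c_def using fI that by simp
  then have sI: "(\<Sum>i\<in>I. f i) \<le> real (card I) * c" using sum_bounded_above[of I f c] by simp
  have "c \<in> f ` I" unfolding c_def using fI I by simp
  then have "c \<le> f j" if "j \<in> H - I" for j using smaller that by auto
  then have sD: "real (card (H - I)) * c \<le> (\<Sum>i\<in>H - I. f i)" using sum_bounded_below[of "H - I" c f] by simp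
  have sH: "(\<Sum>i\<in>H. f i) = (\<Sum>i\<in>I. f i) + (\<Sum>i\<in>H - I. f i)"
    using sum.subset_diff[OF IH H] by (simp add: add.commute)
  have cH: "real (card H) = real (card I) + real (card (H - I))"
    using card_Diff_subset[OF fI IH] card_mono[OF H IH] by simp
  have pI: "real (card I) > 0" using fI I by (simp add: card_gt_0_iff)
  have "(\<Sum>i\<in>I. f i) * real (card (H - I)) \<le> real (card I) * c * real (card (H - I))"
    using sI by (intro mult_right_mono) auto
  also have "\<dots> = real (card I) * (real (card (H - I)) * c)" by simp
  also have "\<dots> \<le> real (card I) * (\<Sum>i\<in>H - I. f i)"
    using sD by (intro mult_left_mono) auto
  finally have "(\<Sum>i\<in>I. f i) * real (card H) \<le> (\<Sum>i\<in>H. f i) * real (card I)"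
    by (simp add: sH cH algebra_simps)
  then show ?thesis using pI cH by (simp add: divide_simps)
qed

lemma mean_le_mean_of_subset_add:
  fixes f :: "nat \<Rightarrow> real"
  assumes I: "finite I" and HI: "H \<subseteq> I" and nonneg: "\<And>i. f i \<ge> 0"
    and bounded: "\<And>i. i \<in> I - H \<Longrightarrow> f i \<le> C" and C: "C \<ge> 0" and \<epsilon>: "\<epsilon> \<ge> 0"
    and large: "real (card H) \<ge> real (card I) - \<epsilon> * real (card I)"
  shows "(\<Sum>i\<in>I. f i) / real (card I) \<le> (\<Sum>i\<in>H. f i) / real (card H) + \<epsilon> * C"
proof (cases "I = {}")
  case True
  then have "H = {}" using HI by simp
  with True C \<epsilon> show ?thesis by simp
next
  case False
  define m k where "m = card I" and "k = card H"
  have H: "finite H" using I HI finite_subset by blast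
  have km: "k \<le> m" unfolding k_def m_def using card_mono[OF I HI] .
  have m: "real m > 0" using I False by (simp add: m_def card_gt_0_iff)
  have sH: "(\<Sum>i\<in>H. f i) \<ge> 0" by (simp add: sum_nonneg nonneg)
  have "(\<Sum>i\<in>I - H. f i) \<le> real (m - k) * C"
    using sum_bounded_above[of "I - H" f C] bounded card_Diff_subset[OF H HI] by (simp add: m_def k_def)
  also have "\<dots> \<le> \<epsilon> * real m * C"
    using large km C by (intro mult_right_mono) (simp_all add: m_def k_def of_nat_diff)
  finally have rest: "(\<Sum>i\<in>I - H. f i) / real m \<le> \<epsilon> * C"
    using m by (simp add: divide_simps mult_ac)
  have head: "(\<Sum>i\<in>H. f i) / real m \<le> (\<Sum>i\<in>H. f i) / real k"
  proof (cases "k = 0")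
    case True
    then show ?thesis using H by (simp add: k_def)
  next
    case False
    then show ?thesis using sH km by (intro divide_left_mono) auto
  qed
  have "(\<Sum>i\<in>I. f i) = (\<Sum>i\<in>H. f i) + (\<Sum>i\<in>I - H. f i)"
    using sum.subset_diff[OF HI I] by (simp add: add.commute)
  then have "(\<Sum>i\<in>I. f i) / real m = (\<Sum>i\<in>H. f i) / real m + (\<Sum>i\<in>I - H. f i) / real m"
    by (simp add: add_divide_distrib)
  with head rest show ?thesis by (simp add: m_def k_def)
qed

definition smallest_mean_bound :: "(nat \<Rightarrow> real) \<Rightarrow> nat \<Rightarrow> nat \<Rightarrow> real \<Rightarrow> real \<Rightarrow> bool" where
  "smallest_mean_bound b N m \<tau> c \<longleftrightarrow>
     (\<forall>I. I \<subseteq> {..<N} \<and> card I = m \<and> (\<forall>i\<in>I. \<forall>j\<in>{..<N} - I. b i \<le> b j)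
        \<longrightarrow> (\<Sum>i\<in>I. (b i)\<^sup>2) / real (card I)
            \<le> (\<Sum>i\<in>Ihat b N \<tau>. (b i)\<^sup>2) / real (card (Ihat b N \<tau>)) + c)"

lemma smallest_mean_bound_of_card:
  fixes b :: "nat \<Rightarrow> real"
  assumes nonneg: "\<And>i. b i \<ge> 0" and "\<tau> \<ge> 0" "\<epsilon> \<ge> 0" "\<delta> \<ge> 0"
    and Ihat: "real (card (Ihat b N \<tau>)) \<ge> real m - \<epsilon> * real m"
    and Ihat_\<delta>: "card (Ihat b N (\<tau> + \<delta>)) \<ge> m"
  shows "smallest_mean_bound b N m \<tau> (\<epsilon> * (\<tau> + \<delta>))"
  unfolding smallest_mean_bound_def
proof (intro allI impI, elim conjE)
  fix I assume IN: "I \<subseteq> {..<N}" and m: "card I = m" and smallest: "\<forall>i\<in>I. \<forall>j\<in>{..<N} - I. b i \<le> b j"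
  have I: "finite I" using IN finite_subset by blast
  have down: "(b j)\<^sup>2 \<le> s \<Longrightarrow> b i \<le> b j \<Longrightarrow> (b i)\<^sup>2 \<le> s" for i j s
    using nonneg[of i] by (meson order_trans power_mono)
  have nested: "I \<subseteq> Ihat b N s \<or> Ihat b N s \<subseteq> I" for s
    unfolding Ihat_def by (rule smallest_subset_or_superset[OF IN smallest down])
  have "0 \<le> (\<Sum>i\<in>Ihat b N \<tau>. (b i)\<^sup>2) / real (card (Ihat b N \<tau>))" "0 \<le> \<epsilon> * (\<tau> + \<delta>)"
    using assms by (simp_all add: sum_nonneg)
  moreover have "I \<subseteq> Ihat b N \<tau> \<Longrightarrow> (\<Sum>i\<in>I. (b i)\<^sup>2) / real (card I)
      \<le> (\<Sum>i\<in>Ihat b N \<tau>. (b i)\<^sup>2) / real (card (Ihat b N \<tau>))" if "I \<noteq> {}"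
    using smallest \<open>I \<noteq> {}\<close> down[of j "(b j)\<^sup>2" i for i j]
    by (intro mean_le_mean_of_superset) (auto simp: Ihat_def)
  moreover have "I \<subseteq> Ihat b N (\<tau> + \<delta>)"
    using nested[of "\<tau> + \<delta>"] card_subset_eq[OF I] Ihat_\<delta> m card_mono[OF I]
    by (metis le_antisym)
  then have "Ihat b N \<tau> \<subseteq> I \<Longrightarrow> (\<Sum>i\<in>I. (b i)\<^sup>2) / real (card I)
      \<le> (\<Sum>i\<in>Ihat b N \<tau>. (b i)\<^sup>2) / real (card (Ihat b N \<tau>)) + \<epsilon> * (\<tau> + \<delta>)"
    using I Ihat m assms by (intro mean_le_mean_of_subset_add) (auto simp: Ihat_def)
  ultimately show "(\<Sum>i\<in>I. (b i)\<^sup>2) / real (card I)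
      \<le> (\<Sum>i\<in>Ihat b N \<tau>. (b i)\<^sup>2) / real (card (Ihat b N \<tau>)) + \<epsilon> * (\<tau> + \<delta>)"
    using nested[of \<tau>] by fastforce
qed

lemma Hoeffding_card_le:
  fixes Z :: "nat \<Rightarrow> 'w \<Rightarrow> real"
  assumes "prob_space M" and ind: "prob_space.indep_vars M (\<lambda>_. borel) Z {..<N}" and N: "N > 0"
    and p: "\<And>j. j < N \<Longrightarrow> measure M {\<omega> \<in> space M. Z j \<omega> \<le> t} = p" and e: "e \<ge> 0"
  shows "measure M {\<omega> \<in> space M. real (card {j \<in> {..<N}. Z j \<omega> \<le> t}) \<le> real N * p - e} \<le> exp (- 2 * e\<^sup>2 / real N)"
proof -
  interpret prob_space M by fact
  define X where "X = (\<lambda>j \<omega>. if Z j \<omega> \<le> t then 1 else (0::real))"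
  have indX: "indep_vars (\<lambda>_. borel) X {..<N}"
    unfolding X_def by (rule indep_vars_compose2[OF ind]) measurable
  have [measurable]: "Z j \<in> borel_measurable M" if "j < N" for j
    using ind that unfolding indep_vars_def by auto
  interpret indep_interval_bounded_random_variables M "{..<N}" X "\<lambda>_. 0" "\<lambda>_. 1"
  proof (unfold_locales)
    show "finite {..<N}" by simp
    show "indep_vars (\<lambda>_. borel) X {..<N}" by (rule indX)
    fix i assume "i \<in> {..<N}"
    show "AE x in M. X i x \<in> {0..1}" by (rule AE_I2) (simp add: X_def)
  qed
  interpret H: Hoeffding_ineq M "{..<N}" X "\<lambda>_. 0" "\<lambda>_. 1" "\<Sum>j<N. expectation (X j)"
    by unfold_locales simp
  have EX: "expectation (X j) = p" if j: "j < N" for j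
  proof -
    have "expectation (X j) = expectation (indicator {\<omega> \<in> space M. Z j \<omega> \<le> t})"
      by (intro Bochner_Integration.integral_cong) (auto simp: X_def indicator_def)
    also have "\<dots> = measure M {\<omega> \<in> space M. Z j \<omega> \<le> t}"
      by (simp add: Int_absorb2 subset_eq)
    finally show ?thesis using p[OF j] by simp
  qed
  have mu: "(\<Sum>j<N. expectation (X j)) = real N * p" using EX by simp
  have cnt: "(\<Sum>j<N. X j \<omega>) = real (card {j \<in> {..<N}. Z j \<omega> \<le> t})" for \<omega>
  proof -
    have "(\<Sum>j<N. X j \<omega>) = (\<Sum>j\<in>{j \<in> {..<N}. Z j \<omega> \<le> t}. 1)"
      unfolding X_def by (rule sum.inter_filter[symmetric]) simp
    then show ?thesis by simp
  qed
  have "measure M {\<omega> \<in> space M. (\<Sum>j<N. X j \<omega>) \<le> (\<Sum>j<N. expectation (X j)) - e} \<le> exp (- 2 * e\<^sup>2 / (\<Sum>j<N. (1 - 0)\<^sup>2))"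
    using H.Hoeffding_ineq_le[OF e] N by simp
  then show ?thesis by (simp add: cnt mu)
qed

lemma smallest_mean_bound_cong:
  assumes "\<And>i. i < N \<Longrightarrow> b i = b' i"
  shows "smallest_mean_bound b N m \<tau> c = smallest_mean_bound b' N m \<tau> c"
proof -
  have Ihat: "Ihat b N \<tau> = Ihat b' N \<tau>" using assms by (auto simp: Ihat_def)
  have sum: "(\<Sum>i\<in>J. (b i)\<^sup>2) = (\<Sum>i\<in>J. (b' i)\<^sup>2)" if "J \<subseteq> {..<N}" for J
    using that assms by (intro sum.cong) auto
  have smallest: "(\<forall>i\<in>I. \<forall>j\<in>{..<N} - I. b i \<le> b j) = (\<forall>i\<in>I. \<forall>j\<in>{..<N} - I. b' i \<le> b' j)"
    if "I \<subseteq> {..<N}" for I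
    using that assms by (intro ball_cong refl) (auto simp: subset_eq)
  have "(I \<subseteq> {..<N} \<and> card I = m \<and> (\<forall>i\<in>I. \<forall>j\<in>{..<N} - I. b i \<le> b j) \<longrightarrow> (\<Sum>i\<in>I. (b i)\<^sup>2) / real (card I) \<le> R)
      = (I \<subseteq> {..<N} \<and> card I = m \<and> (\<forall>i\<in>I. \<forall>j\<in>{..<N} - I. b' i \<le> b' j) \<longrightarrow> (\<Sum>i\<in>I. (b' i)\<^sup>2) / real (card I) \<le> R)"
    for I R
    by (cases "I \<subseteq> {..<N}") (simp_all add: sum smallest)
  moreover have "Ihat b' N \<tau> \<subseteq> {..<N}" by (auto simp: Ihat_def)
  ultimately show ?thesis
    unfolding smallest_mean_bound_def Ihat sum[OF \<open>Ihat b' N \<tau> \<subseteq> {..<N}\<close>] by (simp only:)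
qed

lemma sum_Ihat: "(\<Sum>i\<in>Ihat b N \<tau>. f i) = (\<Sum>i<N. if (b i)\<^sup>2 \<le> \<tau> then f i else 0)"
  unfolding Ihat_def by (rule sum.inter_filter) simp

lemma real_card_Ihat: "real (card (Ihat b N \<tau>)) = (\<Sum>i<N. if (b i)\<^sup>2 \<le> \<tau> then 1 else 0)"
  using sum_Ihat[where b=b and N=N and \<tau>=\<tau> and f="\<lambda>_. 1 :: real"] by simp

lemma borel_measurable_card_Ihat:
  fixes b :: "'w \<Rightarrow> nat \<Rightarrow> real"
  assumes "\<And>j. j < N \<Longrightarrow> (\<lambda>\<omega>. b \<omega> j) \<in> borel_measurable M"
  shows "(\<lambda>\<omega>. real (card (Ihat (b \<omega>) N \<tau>))) \<in> borel_measurable M"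
  unfolding real_card_Ihat
proof (rule borel_measurable_sum)
  fix i assume "i \<in> {..<N}"
  then have [measurable]: "(\<lambda>\<omega>. b \<omega> i) \<in> borel_measurable M" using assms by simp
  show "(\<lambda>\<omega>. if (b \<omega> i)\<^sup>2 \<le> \<tau> then 1 else 0 :: real) \<in> borel_measurable M" by measurable
qed

lemma sets_Collect_smallest_mean_bound:
  fixes b :: "'w \<Rightarrow> nat \<Rightarrow> real"
  assumes b: "\<And>j. j < N \<Longrightarrow> (\<lambda>\<omega>. b \<omega> j) \<in> borel_measurable M"
  shows "{\<omega> \<in> space M. smallest_mean_bound (b \<omega>) N m \<tau> c} \<in> sets M"
proof -
  define b' where "b' \<omega> i = (if i < N then b \<omega> i else 0)" for \<omega> i
  have [measurable]: "(\<lambda>\<omega>. b' \<omega> i) \<in> borel_measurable M" for i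
    using b by (cases "i < N") (simp_all add: b'_def)
  have "{\<omega> \<in> space M. smallest_mean_bound (b \<omega>) N m \<tau> c} = {\<omega> \<in> space M. smallest_mean_bound (b' \<omega>) N m \<tau> c}"
    by (intro Collect_cong conj_cong refl smallest_mean_bound_cong) (simp add: b'_def)
  also have "\<dots> = {\<omega> \<in> space M. \<forall>I\<in>Pow {..<N}. card I = m \<and> (\<forall>i\<in>I. \<forall>j\<in>{..<N} - I. b' \<omega> i \<le> b' \<omega> j)
        \<longrightarrow> (\<Sum>i\<in>I. (b' \<omega> i)\<^sup>2) / real (card I)
            \<le> (\<Sum>i<N. if (b' \<omega> i)\<^sup>2 \<le> \<tau> then (b' \<omega> i)\<^sup>2 else 0) / (\<Sum>i<N. if (b' \<omega> i)\<^sup>2 \<le> \<tau> then 1 else 0) + c}"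
    unfolding smallest_mean_bound_def sum_Ihat real_card_Ihat by (simp only: Ball_def Pow_iff imp_conjL)
  also have "\<dots> \<in> sets M"
  proof (rule sets.sets_Collect_finite_All)
    fix I assume "I \<in> Pow {..<N}"
    then have "finite I" by (auto intro: finite_subset)
    have "{\<omega> \<in> space M. \<forall>i\<in>I. \<forall>j\<in>{..<N} - I. b' \<omega> i \<le> b' \<omega> j} \<in> sets M"
      using \<open>finite I\<close> by (intro sets.sets_Collect_finite_All) (auto intro!: sets.sets_Collect_finite_All)
    moreover have "(\<lambda>\<omega>. (\<Sum>i<N. if (b' \<omega> i)\<^sup>2 \<le> \<tau> then (b' \<omega> i)\<^sup>2 else 0) / (\<Sum>i<N. if (b' \<omega> i)\<^sup>2 \<le> \<tau> then 1 else 0) + c)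
        \<in> borel_measurable M"
      by measurable
    ultimately show "{\<omega> \<in> space M. card I = m \<and> (\<forall>i\<in>I. \<forall>j\<in>{..<N} - I. b' \<omega> i \<le> b' \<omega> j)
        \<longrightarrow> (\<Sum>i\<in>I. (b' \<omega> i)\<^sup>2) / real (card I)
            \<le> (\<Sum>i<N. if (b' \<omega> i)\<^sup>2 \<le> \<tau> then (b' \<omega> i)\<^sup>2 else 0) / (\<Sum>i<N. if (b' \<omega> i)\<^sup>2 \<le> \<tau> then 1 else 0) + c} \<in> sets M"
      by (intro sets.sets_Collect_imp sets.sets_Collect_conj sets.sets_Collect_const borel_measurable_le) auto
  qed simp
  finally show ?thesis .
qed

lemma prob_smallest_mean_bound:
  fixes b :: "'w \<Rightarrow> nat \<Rightarrow> real"
  assumes P: "prob_space M" and N: "N > 0"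
    and b: "\<And>j. j < N \<Longrightarrow> (\<lambda>\<omega>. b \<omega> j) \<in> borel_measurable M" and nonneg: "\<And>\<omega> j. b \<omega> j \<ge> 0"
    and indep: "prob_space.indep_vars M (\<lambda>_. borel) (\<lambda>j \<omega>. (b \<omega> j)\<^sup>2) {..<N}"
    and p: "\<And>j. j < N \<Longrightarrow> measure M {\<omega> \<in> space M. (b \<omega> j)\<^sup>2 \<le> \<tau>} = real m / real N"
    and p': "\<And>j. j < N \<Longrightarrow> measure M {\<omega> \<in> space M. (b \<omega> j)\<^sup>2 \<le> \<tau> + \<delta>} = p'"
    and m: "real m \<le> real N * p'" and "\<tau> \<ge> 0" "\<epsilon> \<ge> 0" "\<delta> \<ge> 0"
  shows "measure M {\<omega> \<in> space M. smallest_mean_bound (b \<omega>) N m \<tau> (\<epsilon> * (\<tau> + \<delta>))}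
    \<ge> 1 - exp (- 2 * (\<epsilon> * real m)\<^sup>2 / real N) - exp (- 2 * (real N * p' - real m)\<^sup>2 / real N)"
proof -
  interpret prob_space M by fact
  have card: "{j \<in> {..<N}. (b \<omega> j)\<^sup>2 \<le> t} = Ihat (b \<omega>) N t" for \<omega> t
    by (simp add: Ihat_def)
  define Bad1 where "Bad1 = {\<omega> \<in> space M. real (card (Ihat (b \<omega>) N \<tau>)) \<le> real m - \<epsilon> * real m}"
  define Bad2 where "Bad2 = {\<omega> \<in> space M. real (card (Ihat (b \<omega>) N (\<tau> + \<delta>))) \<le> real m}"
  have "measure M Bad1 \<le> exp (- 2 * (\<epsilon> * real m)\<^sup>2 / real N)"
    using Hoeffding_card_le[OF P indep N p, of "\<epsilon> * real m", unfolded card] N \<open>\<epsilon> \<ge> 0\<close> by (simp add: Bad1_def)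
  moreover have "measure M Bad2 \<le> exp (- 2 * (real N * p' - real m)\<^sup>2 / real N)"
    using Hoeffding_card_le[OF P indep N p', of "real N * p' - real m", unfolded card] m by (simp add: Bad2_def)
  moreover have [measurable]: "(\<lambda>\<omega>. real (card (Ihat (b \<omega>) N t))) \<in> borel_measurable M" for t
    using b by (rule borel_measurable_card_Ihat)
  then have "Bad1 \<in> sets M" "Bad2 \<in> sets M" unfolding Bad1_def Bad2_def by measurable
  then have "1 - measure M Bad1 - measure M Bad2 \<le> measure M (space M - (Bad1 \<union> Bad2))"
    using measure_Un_le[of Bad1 M Bad2] by (simp add: prob_compl)
  moreover have "space M - (Bad1 \<union> Bad2) \<subseteq> {\<omega> \<in> space M. smallest_mean_bound (b \<omega>) N m \<tau> (\<epsilon> * (\<tau> + \<delta>))}"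
  proof
    fix \<omega> assume "\<omega> \<in> space M - (Bad1 \<union> Bad2)"
    then have "\<omega> \<in> space M" "real (card (Ihat (b \<omega>) N \<tau>)) \<ge> real m - \<epsilon> * real m"
      "card (Ihat (b \<omega>) N (\<tau> + \<delta>)) \<ge> m"
      by (auto simp: Bad1_def Bad2_def)
    with smallest_mean_bound_of_card[of "b \<omega>"] nonneg assms
    show "\<omega> \<in> {\<omega> \<in> space M. smallest_mean_bound (b \<omega>) N m \<tau> (\<epsilon> * (\<tau> + \<delta>))}" by simp
  qed
  then have "measure M (space M - (Bad1 \<union> Bad2)) \<le> measure M {\<omega> \<in> space M. smallest_mean_bound (b \<omega>) N m \<tau> (\<epsilon> * (\<tau> + \<delta>))}"
    using b by (intro finite_measure_mono sets_Collect_smallest_mean_bound)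
  ultimately show ?thesis by linarith
qed

lemma exp_neg_le_exp_neg_scaled:
  fixes a s :: real
  assumes "a \<ge> 0" "s\<^sup>2 \<le> 1"
  shows "exp (- a) \<le> exp (- (s\<^sup>2 * a))"
  using assms mult_left_le_one_le[of a "s\<^sup>2"] by simp

lemma sq_one_minus_exp_neg_half_ge:
  fixes \<delta> :: real
  assumes "\<delta> \<ge> 0"
  shows "\<delta>\<^sup>2 * exp (- \<delta>) / 4 \<le> (1 - exp (- \<delta> / 2))\<^sup>2"
proof -
  have "(1 + \<delta> / 2) * exp (- \<delta> / 2) \<le> exp (\<delta> / 2) * exp (- \<delta> / 2)"
    using exp_ge_add_one_self[of "\<delta> / 2"] by (intro mult_right_mono) auto
  then have "\<delta> / 2 * exp (- \<delta> / 2) \<le> 1 - exp (- \<delta> / 2)"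
    by (simp add: algebra_simps exp_minus_inverse)
  then have "(\<delta> / 2 * exp (- \<delta> / 2))\<^sup>2 \<le> (1 - exp (- \<delta> / 2))\<^sup>2"
    using assms by (intro power_mono) auto
  moreover have "(exp (- \<delta> / 2))\<^sup>2 = exp (- \<delta>)"
    by (simp add: power2_eq_square exp_add[symmetric])
  ultimately show ?thesis by (simp add: power_mult_distrib power_divide)
qed

lemma exp_neg_tau_star:
  assumes "m < N"
  shows "exp (- tau_star m N / 2) = 1 - real m / real N"
  using assms by (simp add: tau_star_def)

lemma tau_star_nonneg: "m < N \<Longrightarrow> tau_star m N \<ge> 0"
  by (simp add: tau_star_def)

lemma bval_sq_le_tau_star_prob:
  assumes "prob_space M" "iid_complex_gaussian_matrix M A n N"
    and "j < N" "cvec_norm n x0 = 1" "m < N" "s \<ge> 0"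
  shows "measure M {\<omega> \<in> space M. (bval n (A \<omega>) x0 j)\<^sup>2 \<le> tau_star m N + s}
    = 1 - (1 - real m / real N) * exp (- s / 2)"
proof -
  have "exp (- (tau_star m N + s) / 2) = exp (- tau_star m N / 2) * exp (- s / 2)"
    by (simp add: exp_add[symmetric] field_simps)
  then show ?thesis
    using bval_sq_le_prob[OF assms(1-4), of "tau_star m N + s"] assms(5,6) exp_neg_tau_star[OF assms(5)]
    by (simp add: tau_star_nonneg)
qed

lemma Hoeffding_exponent_le:
  assumes "m < N"
  shows "exp (- 2 * (\<epsilon> * real m)\<^sup>2 / real N)
    \<le> exp (- 2 * \<epsilon>\<^sup>2 * \<bar>1 - real m / real N\<bar>\<^sup>2 * (real m)\<^sup>2 / real N)"
proof -
  define q where "q = 1 - real m / real N"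
  have "q\<^sup>2 \<le> 1" using assms by (simp add: q_def power_le_one)
  moreover have eq: "q\<^sup>2 * (2 * (\<epsilon> * real m)\<^sup>2 / real N) = 2 * \<epsilon>\<^sup>2 * \<bar>1 - real m / real N\<bar>\<^sup>2 * (real m)\<^sup>2 / real N"
    by (simp add: q_def power_mult_distrib)
  ultimately show ?thesis
    using exp_neg_le_exp_neg_scaled[of "2 * (\<epsilon> * real m)\<^sup>2 / real N" q] unfolding eq by simp
qed

lemma Hoeffding_exponent_shift_le:
  assumes "m < N" "\<delta> \<ge> 0"
  shows "exp (- 2 * (real N * (1 - (1 - real m / real N) * exp (- \<delta> / 2)) - real m)\<^sup>2 / real N)
    \<le> exp (- (1/2) * \<delta>\<^sup>2 * exp (- \<delta>) * \<bar>1 - real m / real N\<bar>\<^sup>2 * real N)"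
proof -
  define q u where "q = 1 - real m / real N" and "u = 1 - exp (- \<delta> / 2)"
  have e1: "- 2 * (real N * (1 - q * exp (- \<delta> / 2)) - real m)\<^sup>2 / real N = - (2 * real N * q\<^sup>2 * u\<^sup>2)"
    using assms(1) by (simp add: q_def u_def power2_eq_square field_simps)
  have e2: "- (1/2) * \<delta>\<^sup>2 * exp (- \<delta>) * \<bar>1 - real m / real N\<bar>\<^sup>2 * real N
      = - (2 * real N * q\<^sup>2 * (\<delta>\<^sup>2 * exp (- \<delta>) / 4))"
    unfolding q_def by (simp add: field_simps)
  have "2 * real N * q\<^sup>2 * (\<delta>\<^sup>2 * exp (- \<delta>) / 4) \<le> 2 * real N * q\<^sup>2 * u\<^sup>2"
    unfolding u_def using assms(2) by (intro mult_left_mono sq_one_minus_exp_neg_half_ge) auto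
  then show ?thesis unfolding e1 e2 q_def[symmetric] by (simp add: ac_simps)
qed

theorem proposition5:
  fixes M :: "'w measure" and A :: "'w \<Rightarrow> nat \<Rightarrow> nat \<Rightarrow> complex"
    and x0 :: "nat \<Rightarrow> complex" and n N m :: nat and \<epsilon> \<delta> :: real
  assumes "prob_space M"
    and "iid_complex_gaussian_matrix M A n N"
    and "cvec_norm n x0 = 1"
    and "m < N"
    and "\<epsilon> > 0" and "\<delta> > 0"
  shows "measure M {\<omega> \<in> space M.
           \<forall>I. I \<subseteq> {..<N} \<and> card I = m
               \<and> (\<forall>i\<in>I. \<forall>j\<in>{..<N} - I. bval n (A \<omega>) x0 i \<le> bval n (A \<omega>) x0 j)
             \<longrightarrow> (\<Sum>i\<in>I. (bval n (A \<omega>) x0 i)\<^sup>2) / real (card I)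
                 \<le> (\<Sum>i\<in>Ihat (bval n (A \<omega>) x0) N (tau_star m N). (bval n (A \<omega>) x0 i)\<^sup>2)
                     / real (card (Ihat (bval n (A \<omega>) x0) N (tau_star m N)))
                   + \<epsilon> * (tau_star m N + \<delta>)}
         \<ge> 1 - 2 * exp (- (1/2) * \<delta>\<^sup>2 * exp (- \<delta>) * \<bar>1 - real m / real N\<bar>\<^sup>2 * real N)
             - 2 * exp (- 2 * \<epsilon>\<^sup>2 * \<bar>1 - real m / real N\<bar>\<^sup>2 * (real m)\<^sup>2 / real N)"
proof -
  note P = assms(1) and G = assms(2)
  define q \<tau> where "q = 1 - real m / real N" and "\<tau> = tau_star m N"
  have N: "N > 0" and \<tau>: "\<tau> \<ge> 0" using \<open>m < N\<close> by (simp_all add: \<tau>_def tau_star_nonneg)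
  have tail: "measure M {\<omega> \<in> space M. (bval n (A \<omega>) x0 j)\<^sup>2 \<le> \<tau> + s} = 1 - q * exp (- s / 2)"
    if "j < N" "s \<ge> 0" for j s
    unfolding \<tau>_def q_def using assms that by (intro bval_sq_le_tau_star_prob)
  have "q * exp (- \<delta> / 2) \<le> q"
    using \<open>m < N\<close> \<open>\<delta> > 0\<close> by (intro mult_right_le_one_le) (auto simp: q_def)
  then have "real m \<le> real N * (1 - q * exp (- \<delta> / 2))"
    using N by (simp add: q_def field_simps)
  then have "measure M {\<omega> \<in> space M. smallest_mean_bound (bval n (A \<omega>) x0) N m \<tau> (\<epsilon> * (\<tau> + \<delta>))}
    \<ge> 1 - exp (- 2 * (\<epsilon> * real m)\<^sup>2 / real N) - exp (- 2 * (real N * (1 - q * exp (- \<delta> / 2)) - real m)\<^sup>2 / real N)"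
    using tail[of _ 0] tail[of _ \<delta>] assms \<tau> N
    by (intro prob_smallest_mean_bound[OF P N borel_measurable_bval[OF P G] _ indep_vars_bval_sq[OF P G]])
      (auto simp: bval_def q_def)
  \<comment> \<open>the factors \<open>2\<close> in front of the exponentials in the stated bound are slack\<close>
  with Hoeffding_exponent_le[OF \<open>m < N\<close>, of \<epsilon>] Hoeffding_exponent_shift_le[OF \<open>m < N\<close>, of \<delta>] \<open>\<delta> > 0\<close>
  show ?thesis unfolding smallest_mean_bound_def \<tau>_def q_def by (smt (verit) exp_ge_zero)
qed

end
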